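(* Let $p$ be an odd prime, $f:\mathbb{F}_p^n\to[0,1]$ with $\mathbb{E}[f]=\alpha$, and $\beta>0$. Let $H$ be a subspace of $\mathbb{F}_p^n$ with $|H|\ge 2\alpha/\beta$ and $b(H)\ge 2^{8+8C_p}\beta$. If $\lambda(H)<\beta$, then there is a subspace $H'\subseteq H$ with $\mathrm{Codim}(H')\le\mathrm{Codim}(H)+p^{\mathrm{Codim}(H)}\cdot 36/\beta^2$ and $b(H')/\beta>(b(H)/\beta)^{1+\tau_p}$, where $\tau_p=1/(2C_p)$.
   Context: For $f:\mathbb{F}_p^n\to[0,1]$ and a subspace $H$, $\mathrm{Codim}(H)=n-\dim H$; for $g\in\mathbb{F}_p^n$, $\alpha(H+g)=\mathbb{E}_{x\in H+g}f(x)$; the mean cube density is $b(H)=\mathbb{E}_{g\in\mathbb{F}_p^n}[\alpha(H+g)^3]$. The density of 3-APs with nonzero common difference in $H$ is $\lambda(H)=\mathbb{E}_{x\in\mathbb{F}_p^n}\mathbb{E}_{d\in H\setminus\{0\}}[f(x)f(x+d)f(x+2d)]$ (equivalently, the average over translates of $H$ of the density of nontrivial 3-APs of $f$ inside the translate). $C_p\ge1$ is a constant depending only on $p$ (with $C_p=\Theta(\log p)$) such that for every $m\ge1$ and every $X\subseteq\mathbb{F}_p^m$ with $|X|=xp^m$, the number of pairs $(a,d)\in(\mathbb{F}_p^m)^2$ with $a,a+d,a+2d\in X$ is at least $x^{C_p}p^{2m}$. *)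

theory Defs
  imports "HOL-Analysis.Analysis" "Berlekamp_Zassenhaus.Finite_Field"
begin

type_synonym ('p, 'n) Fpn = "('p mod_ring) ^ 'n"

definition Codim :: "('p::prime_card, 'n::finite) Fpn set \<Rightarrow> nat" where
  "Codim H = CARD('n) - vec.dim H"

definition coset_density :: "(('p::prime_card, 'n::finite) Fpn \<Rightarrow> real) \<Rightarrow> ('p, 'n) Fpn set \<Rightarrow> ('p, 'n) Fpn \<Rightarrow> real" where
  "coset_density f H g = (\<Sum>x\<in>H. f (x + g)) / real (card H)"

definition mean_cube_density :: "(('p::prime_card, 'n::finite) Fpn \<Rightarrow> real) \<Rightarrow> ('p, 'n) Fpn set \<Rightarrow> real" where
  "mean_cube_density f H =
     (\<Sum>g\<in>(UNIV :: ('p, 'n) Fpn set). (coset_density f H g) ^ 3) / real CARD(('p, 'n) Fpn)"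

definition ap_density :: "(('p::prime_card, 'n::finite) Fpn \<Rightarrow> real) \<Rightarrow> ('p, 'n) Fpn set \<Rightarrow> real" where
  "ap_density f H =
     (\<Sum>x\<in>(UNIV :: ('p, 'n) Fpn set).
        (\<Sum>d\<in>H - {0}. f x * f (x + d) * f (x + 2 *s d)) / real (card (H - {0})))
     / real CARD(('p, 'n) Fpn)"

text \<open>F_p^m for a natural number m, as functions nat => F_p vanishing from index m on.\<close>
definition Fpm :: "nat \<Rightarrow> (nat \<Rightarrow> 'p::prime_card mod_ring) set" where
  "Fpm m = {x. \<forall>i\<ge>m. x i = 0}"

definition three_AP_const :: "'p::prime_card itself \<Rightarrow> real \<Rightarrow> bool" where
  "three_AP_const _ C \<longleftrightarrow>
     (\<forall>m\<ge>1. \<forall>X \<subseteq> (Fpm m :: (nat \<Rightarrow> 'p mod_ring) set).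
        real (card {(a, d). a \<in> Fpm m \<and> d \<in> Fpm m \<and> a \<in> X \<and> (\<lambda>i. a i + d i) \<in> X \<and> (\<lambda>i. a i + 2 * d i) \<in> X})
          \<ge> (real (card X) / real CARD('p) ^ m) powr C * real CARD('p) ^ (2 * m))"

end

theory Submission
  imports Defs
begin

text \<open>
  Let \<open>V = \<bbbF>\<^sub>p\<^sup>n\<close> and \<open>N = |V|\<close>. By Parseval, for every coset \<open>g + H\<close> only few frequencies carry a
  Fourier coefficient of \<open>f\<cdot>1\<^bsub>g+H\<^esub>\<close> larger than \<open>\<epsilon> = \<beta>|H|/(6N)\<close>, and this set is a union of classes
  modulo the annihilator of \<open>H\<close>. Over all cosets at most \<open>|H|/(N\<epsilon>\<^sup>2)\<close> distinct linear functionals on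
  \<open>H\<close> arise; their common kernel \<open>H' \<subseteq> H\<close> has the required codimension. Averaging \<open>f\<close> over the
  cosets of \<open>H'\<close> kills exactly the small coefficients, so by the Fourier expression for 3-AP counts the
  number of 3-APs in each coset of \<open>H\<close> changes by at most \<open>\<beta>|H|\<^sup>2/2\<close>. Since \<open>\<lambda>(H) < \<beta>\<close> and
  \<open>|H| \<ge> 2\<alpha>/\<beta>\<close>, the smoothed counts are small on average, and by Markov's inequality half of the
  cube mass \<open>b(H)\<close> lies on cosets with at most \<open>\<theta>\<alpha>(g+H)\<^sup>3|H|\<^sup>2\<close> smoothed 3-APs,
  \<open>\<theta> = 4\<beta>/b(H)\<close>. On such a coset the defining property of \<open>C\<^sub>p\<close> forces the level set
  \<open>{F \<ge> \<alpha>(g+H)/2}\<close> of the smoothed function \<open>F\<close> to have relative size at most \<open>(8\<theta>)\<^bsup>1/C\<^esup>\<close>,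
  and mass concentrated on a small set has a large mean cube. This gives
  \<open>b(H') \<ge> b(H) (32\<beta>/b(H))\<^bsup>-2/C\<^esup>/16\<close>, which beats \<open>\<beta> (b(H)/\<beta>)\<^bsup>1+1/(2C)\<^esup>\<close> once
  \<open>b(H) \<ge> 2\<^bsup>8+8C\<^esup>\<beta>\<close>.
\<close>

section \<open>Characters and the Fourier transform\<close>

definition dotp :: "('p::prime_card, 'n::finite) Fpn \<Rightarrow> ('p, 'n) Fpn \<Rightarrow> 'p mod_ring" where
  "dotp r x = (\<Sum>i\<in>UNIV. r$i * x$i)"

lemma dotp_add_right: "dotp r (x + y) = dotp r x + dotp r y"
  by (simp add: dotp_def distrib_left sum.distrib)

lemma dotp_add_left: "dotp (r + s) x = dotp r x + dotp s x"
  by (simp add: dotp_def distrib_right sum.distrib)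

lemma dotp_diff_right: "dotp r (x - y) = dotp r x - dotp r y"
  by (simp add: dotp_def sum_subtractf right_diff_distrib)

lemma dotp_diff_left: "dotp (r - s) x = dotp r x - dotp s x"
  by (simp add: dotp_def sum_subtractf left_diff_distrib)

lemma dotp_neg_right: "dotp r (- x) = - dotp r x"
  by (simp add: dotp_def sum_negf)

lemma dotp_scale_right: "dotp r (c *s x) = c * dotp r x"
  by (simp add: dotp_def sum_distrib_left mult.left_commute)

lemma dotp_scale_left: "dotp (c *s r) x = c * dotp r x"
  by (simp add: dotp_def sum_distrib_left mult.assoc)

lemma dotp_zero_right [simp]: "dotp r 0 = 0"
  by (simp add: dotp_def)

lemma dotp_sum_right: "dotp r (sum f A) = (\<Sum>a\<in>A. dotp r (f a))"
  by (induct A rule: infinite_finite_induct) (simp_all add: dotp_add_right)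

lemma dotp_commute: "dotp r x = dotp x r"
  by (simp add: dotp_def mult.commute)

lemma dotp_axis: "dotp r (axis i c) = r$i * c"
proof -
  have "dotp r (axis i c) = (\<Sum>j\<in>UNIV. if j = i then r$i * c else 0)"
    unfolding dotp_def by (intro sum.cong) (auto simp: axis_def)
  thus ?thesis by simp
qed

lemma dotp_eq_0_all_iff: "(\<forall>x. dotp r x = 0) \<longleftrightarrow> r = 0"
  by (metis dotp_axis dotp_commute dotp_scale_right mult_1_right mult_zero_right vec_eq_iff zero_index)

lemma CARD_prime_card_gt_1: "CARD('p::prime_card) > 1"
  using prime_card[where 'a='p] prime_gt_1_nat by blast

lemma two_neq_zero_mod_ring:
  assumes "CARD('p::prime_card) \<noteq> 2"
  shows "(2::'p mod_ring) \<noteq> 0"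
proof
  assume "(2::'p mod_ring) = 0"
  hence "CARD('p) dvd 2" using of_nat_0_mod_ring_dvd[of 2] by simp
  with CARD_prime_card_gt_1[where 'p='p] have "CARD('p) = 2"
    using dvd_imp_le[of "CARD('p)" 2] by (auto simp: le_Suc_eq)
  with assms show False by simp
qed

definition add_char :: "'p::prime_card mod_ring \<Rightarrow> complex" where
  "add_char a = cis (2 * pi * real_of_int (to_int_mod_ring a) / real CARD('p))"

lemma add_char_add: "add_char (a + b) = add_char a * add_char (b :: 'p::prime_card mod_ring)"
proof -
  define A B p where "A = to_int_mod_ring a" and "B = to_int_mod_ring b" and "p = int CARD('p)"
  have p: "p > 0" unfolding p_def using CARD_prime_card_gt_1[where 'p='p] by simp
  have "add_char a * add_char b = cis (2 * pi * real_of_int (A + B) / real CARD('p))"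
    unfolding add_char_def A_def B_def cis_mult by (simp add: add_divide_distrib ring_distribs)
  also have "real_of_int (A + B) = real_of_int ((A + B) mod p) + real_of_int p * real_of_int ((A + B) div p)"
    by (metis mod_mult_div_eq mult.commute of_int_add of_int_mult)
  also have "2 * pi * \<dots> / real CARD('p)
      = 2 * pi * real_of_int ((A + B) mod p) / real CARD('p) + 2 * pi * real_of_int ((A + B) div p)"
    using p unfolding p_def by (simp add: field_simps)
  also have "cis \<dots> = cis (2 * pi * real_of_int ((A + B) mod p) / real CARD('p))"
    by (simp add: cis_mult[symmetric])
  also have "\<dots> = add_char (a + b)"
    unfolding add_char_def to_int_mod_ring_add A_def B_def p_def by simp
  finally show ?thesis by simp
qed

lemma add_char_zero [simp]: "add_char 0 = 1"
  by (simp add: add_char_def)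

lemma norm_add_char [simp]: "norm (add_char a) = 1"
  by (simp add: add_char_def)

lemma add_char_neg: "add_char (- a) = cnj (add_char a)"
proof -
  have "add_char a * add_char (- a) = 1" by (simp add: add_char_add[symmetric])
  moreover have "add_char a * cnj (add_char a) = 1"
    using complex_norm_square[of "add_char a"] by simp
  moreover have "add_char a \<noteq> 0" by (metis norm_add_char norm_zero zero_neq_one)
  ultimately show ?thesis by (metis mult_left_cancel)
qed

lemma add_char_eq_1_iff: "add_char (a :: 'p::prime_card mod_ring) = 1 \<longleftrightarrow> a = 0"
proof
  assume "add_char a = 1"
  define A where "A = to_int_mod_ring a"
  have A: "A \<in> {0..<int CARD('p)}" unfolding A_def using range_to_int_mod_ring by blast
  have "cos (2 * pi * real_of_int A / real CARD('p)) = 1"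
    using \<open>add_char a = 1\<close> unfolding add_char_def A_def by (metis cis.simps(1) one_complex.simps(1))
  then obtain k :: int where "2 * pi * real_of_int A / real CARD('p) = real_of_int k * 2 * pi"
    using cos_one_2pi_int by metis
  hence Ak: "A = k * int CARD('p)"
    by (simp add: field_simps) (metis of_int_eq_iff of_int_mult of_int_of_nat_eq)
  with A have "k = 0" by (simp add: zero_le_mult_iff mult_less_cancel_right)
  with Ak show "a = 0"
    unfolding A_def by (metis mult_zero_left of_int_mod_ring_to_int_mod_ring of_int_mod_ring_hom.hom_zero)
qed simp

definition character :: "('p::prime_card, 'n::finite) Fpn \<Rightarrow> ('p, 'n) Fpn \<Rightarrow> complex" where
  "character r x = add_char (dotp r x)"

lemma character_add_right: "character r (x + y) = character r x * character r y"
  by (simp add: character_def dotp_add_right add_char_add)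

lemma character_add_left: "character (r + s) x = character r x * character s x"
  by (simp add: character_def dotp_add_left add_char_add)

lemma character_neg_right: "character r (- x) = cnj (character r x)"
  by (simp add: character_def dotp_neg_right add_char_neg)

lemma norm_character [simp]: "norm (character r x) = 1"
  by (simp add: character_def)

lemma character_scale_left: "character (c *s r) x = character r (c *s x)"
  by (simp add: character_def dotp_scale_left dotp_scale_right)

lemma character_neg_neg: "character (- r) (- x) = character r x"
  by (simp add: character_def dotp_def)

lemma character_commute: "character r x = character x r"
  by (simp add: character_def dotp_commute)

definition annihilator :: "('p::prime_card, 'n::finite) Fpn set \<Rightarrow> ('p, 'n) Fpn set" where
  "annihilator K = {r. \<forall>y\<in>K. dotp r y = 0}"

lemma sum_character_subspace:
  assumes K: "vec.subspace K"
  shows "(\<Sum>y\<in>K. character r y) = (if r \<in> annihilator K then of_nat (card K) else 0)"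
proof (cases "r \<in> annihilator K")
  case True
  hence "(\<Sum>y\<in>K. character r y) = (\<Sum>y\<in>K. 1)"
    by (intro sum.cong) (auto simp: character_def annihilator_def)
  thus ?thesis using True by simp
next
  case False
  then obtain y0 where y0: "y0 \<in> K" "dotp r y0 \<noteq> 0" by (auto simp: annihilator_def)
  have "(\<Sum>y\<in>K. character r y) = (\<Sum>y\<in>K. character r (y + y0))"
    using y0 vec.subspace_add[OF K] vec.subspace_diff[OF K]
    by (intro sum.reindex_bij_witness[of _ "\<lambda>y. y + y0" "\<lambda>y. y - y0"]) auto
  also have "\<dots> = character r y0 * (\<Sum>y\<in>K. character r y)"
    by (simp add: character_add_right sum_distrib_left mult.commute)
  finally have "(1 - character r y0) * (\<Sum>y\<in>K. character r y) = 0" by (simp add: algebra_simps)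
  moreover have "character r y0 \<noteq> 1" using y0 by (simp add: character_def add_char_eq_1_iff)
  ultimately have "(\<Sum>y\<in>K. character r y) = 0" by simp
  with False show ?thesis by (subst if_not_P) auto
qed

lemma sum_character_UNIV:
  fixes z :: "('p::prime_card, 'n::finite) Fpn"
  shows "(\<Sum>r\<in>UNIV. character r z) = (if z = 0 then of_nat CARD(('p, 'n) Fpn) else 0)"
  using sum_character_subspace[OF vec.subspace_UNIV, of z]
  by (simp add: character_commute[of _ z] annihilator_def dotp_eq_0_all_iff)

lemma sum_weighted_character_UNIV:
  fixes w :: "('p::prime_card, 'n::finite) Fpn \<Rightarrow> complex"
  shows "(\<Sum>c\<in>UNIV. w c * (\<Sum>r\<in>UNIV. character r (z - c))) = of_nat CARD(('p, 'n) Fpn) * w z"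
  by (simp add: sum_character_UNIV if_distrib sum.delta' cong: if_cong)

lemma sum_UNIV_translate: "(\<Sum>d\<in>UNIV. g (x + d)) = (\<Sum>b\<in>UNIV. g (b :: 'a::{ab_group_add, finite}))"
  by (rule sum.reindex_bij_witness[of _ "\<lambda>b. b - x" "\<lambda>d. x + d"]) auto

definition fourier :: "(('p::prime_card, 'n::finite) Fpn \<Rightarrow> real) \<Rightarrow> ('p, 'n) Fpn \<Rightarrow> complex" where
  "fourier u r = (\<Sum>x\<in>UNIV. of_real (u x) * character r (- x)) / of_nat CARD(('p, 'n) Fpn)"

lemma sum_sum_sum_swap:
  "(\<Sum>r\<in>R. \<Sum>y\<in>Y. \<Sum>x\<in>X. F r y x) = (\<Sum>y\<in>Y. \<Sum>x\<in>X. \<Sum>r\<in>R. F r y x)"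
  by (rule trans[OF sum.swap]) (rule sum.cong[OF refl sum.swap])

lemma parseval:
  fixes u :: "('p::prime_card, 'n::finite) Fpn \<Rightarrow> real"
  shows "(\<Sum>r\<in>UNIV. (cmod (fourier u r))\<^sup>2) = (\<Sum>x\<in>UNIV. (u x)\<^sup>2) / real CARD(('p, 'n) Fpn)"
proof -
  define N where "N = CARD(('p, 'n) Fpn)"
  have char_diff: "character r (y - x) = character r (- x) * character r y" for r x y :: "('p, 'n) Fpn"
    by (metis character_add_right diff_conv_add_uminus add.commute)
  have sq: "fourier u r * cnj (fourier u r) =
      (\<Sum>y\<in>UNIV. \<Sum>x\<in>UNIV. of_real (u x * u y) * character r (y - x)) / (of_nat N)\<^sup>2" for r
  proof -
    have "cnj (fourier u r) = (\<Sum>y\<in>UNIV. of_real (u y) * character r y) / of_nat N"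
      unfolding fourier_def N_def by (simp add: cnj_sum character_neg_right)
    hence "fourier u r * cnj (fourier u r) = (\<Sum>x\<in>UNIV. of_real (u x) * character r (- x)) *
        (\<Sum>y\<in>UNIV. of_real (u y) * character r y) / (of_nat N)\<^sup>2"
      unfolding fourier_def N_def by (simp add: power2_eq_square)
    also have "(\<Sum>x\<in>UNIV. of_real (u x) * character r (- x)) * (\<Sum>y\<in>UNIV. of_real (u y) * character r y)
        = (\<Sum>y\<in>UNIV. \<Sum>x\<in>UNIV. of_real (u x * u y) * character r (y - x))"
      unfolding sum_product char_diff by (rule trans[OF sum.swap]) (simp add: mult_ac)
    finally show ?thesis .
  qed
  have "complex_of_real (\<Sum>r\<in>UNIV. (cmod (fourier u r))\<^sup>2) = (\<Sum>r\<in>UNIV. fourier u r * cnj (fourier u r))"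
    by (simp only: of_real_sum complex_norm_square)
  also have "\<dots> = (\<Sum>y\<in>UNIV. \<Sum>x\<in>UNIV. of_real (u x * u y) * (\<Sum>r\<in>UNIV. character r (y - x))) / (of_nat N)\<^sup>2"
    unfolding sq sum_divide_distrib[symmetric] by (subst sum_sum_sum_swap) (simp only: sum_distrib_left)
  also have "\<dots> = (\<Sum>y\<in>UNIV. of_nat N * of_real (u y * u y)) / (of_nat N)\<^sup>2"
    by (simp only: sum_weighted_character_UNIV N_def)
  also have "\<dots> = complex_of_real ((\<Sum>x\<in>UNIV. (u x)\<^sup>2) / real N)"
    by (simp add: sum_distrib_left[symmetric] power2_eq_square N_def)
  finally show ?thesis unfolding N_def by (simp only: of_real_eq_iff)
qed

definition ap_count :: "(('p::prime_card, 'n::finite) Fpn \<Rightarrow> real) \<Rightarrow> real" where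
  "ap_count u = (\<Sum>x\<in>UNIV. \<Sum>d\<in>UNIV. u x * u (x + d) * u (x + 2 *s d))"

lemma sum_3ap_eq_sum_pairs:
  fixes F :: "('p::prime_card, 'n::finite) Fpn \<Rightarrow> ('p, 'n) Fpn \<Rightarrow> ('p, 'n) Fpn \<Rightarrow> 'b::comm_monoid_add"
  shows "(\<Sum>x\<in>UNIV. \<Sum>d\<in>UNIV. F x (x + d) (x + 2 *s d)) = (\<Sum>a\<in>UNIV. \<Sum>b\<in>UNIV. F a b (2 *s b - a))"
proof (rule sum.cong[OF refl])
  fix x :: "('p, 'n) Fpn"
  have "x + 2 *s d = 2 *s (x + d) - x" for d by (simp add: vec_eq_iff algebra_simps)
  hence "(\<Sum>d\<in>UNIV. F x (x + d) (x + 2 *s d)) = (\<Sum>d\<in>UNIV. (\<lambda>b. F x b (2 *s b - x)) (x + d))"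
    by (simp only:)
  also have "\<dots> = (\<Sum>b\<in>UNIV. F x b (2 *s b - x))" by (rule sum_UNIV_translate)
  finally show "(\<Sum>d\<in>UNIV. F x (x + d) (x + 2 *s d)) = (\<Sum>b\<in>UNIV. F x b (2 *s b - x))" .
qed

lemma fourier_triple_product:
  fixes u :: "('p::prime_card, 'n::finite) Fpn \<Rightarrow> real"
  shows "fourier u r * fourier u (- (2 *s r)) * fourier u r =
    (\<Sum>a\<in>UNIV. \<Sum>b\<in>UNIV. \<Sum>c\<in>UNIV. of_real (u a * u b * u c) * character r (2 *s b - a - c))
      / (of_nat CARD(('p, 'n) Fpn))^3"
proof -
  have "character (- (2 *s r)) (- b) = character r (2 *s b)" for b
    by (simp only: character_neg_neg character_scale_left)
  moreover have char_split: "character r (2 *s b - a - c) = character r (- a) * character r (2 *s b) * character r (- c)"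
    for a b c :: "('p, 'n) Fpn"
    by (metis character_add_right diff_conv_add_uminus add.commute)
  ultimately have "fourier u r * fourier u (- (2 *s r)) * fourier u r =
      (\<Sum>a\<in>UNIV. of_real (u a) * character r (- a)) * (\<Sum>b\<in>UNIV. of_real (u b) * character r (2 *s b))
      * (\<Sum>c\<in>UNIV. of_real (u c) * character r (- c)) / (of_nat CARD(('p, 'n) Fpn))^3"
    unfolding fourier_def by (simp add: power3_eq_cube)
  also have "(\<Sum>a\<in>UNIV. of_real (u a) * character r (- a)) * (\<Sum>b\<in>UNIV. of_real (u b) * character r (2 *s b))
      * (\<Sum>c\<in>UNIV. of_real (u c) * character r (- c))
      = (\<Sum>b\<in>UNIV. \<Sum>a\<in>UNIV. \<Sum>c\<in>UNIV. of_real (u a * u b * u c) * character r (2 *s b - a - c))"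
    unfolding char_split by (simp only: sum_distrib_right sum_distrib_left of_real_mult mult_ac)
  also have "\<dots> = (\<Sum>a\<in>UNIV. \<Sum>b\<in>UNIV. \<Sum>c\<in>UNIV. of_real (u a * u b * u c) * character r (2 *s b - a - c))"
    by (rule sum.swap)
  finally show ?thesis .
qed

lemma ap_count_fourier:
  fixes u :: "('p::prime_card, 'n::finite) Fpn \<Rightarrow> real"
  shows "complex_of_real (ap_count u) =
    (of_nat CARD(('p, 'n) Fpn))\<^sup>2 * (\<Sum>r\<in>UNIV. fourier u r * fourier u (- (2 *s r)) * fourier u r)"
proof -
  define N where "N = CARD(('p, 'n) Fpn)"
  have N: "(of_nat N :: complex) \<noteq> 0" unfolding N_def by simp
  have "(\<Sum>r\<in>UNIV. \<Sum>a\<in>UNIV. \<Sum>b\<in>UNIV. \<Sum>c\<in>UNIV. of_real (u a * u b * u c) * character r (2 *s b - a - c))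
      = (\<Sum>a\<in>UNIV. \<Sum>b\<in>UNIV. \<Sum>c\<in>UNIV. of_real (u a * u b * u c) * (\<Sum>r\<in>UNIV. character r (2 *s b - a - c)))"
    by (subst sum.swap, rule sum.cong[OF refl], subst sum_sum_sum_swap) (simp only: sum_distrib_left)
  also have "\<dots> = (\<Sum>a\<in>UNIV. \<Sum>b\<in>UNIV. of_nat N * of_real (u a * u b * u (2 *s b - a)))"
    unfolding N_def by (simp only: sum_weighted_character_UNIV)
  also have "\<dots> = of_nat N * complex_of_real (ap_count u)"
    unfolding ap_count_def sum_3ap_eq_sum_pairs[of "\<lambda>x y z. u x * u y * u z"]
    by (simp add: sum_distrib_left)
  finally show ?thesis
    using N unfolding fourier_triple_product sum_divide_distrib[symmetric] N_def[symmetric]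
    by (simp add: power2_eq_square power3_eq_cube)
qed

lemma bij_neg_scale_two:
  assumes "CARD('p::prime_card) \<noteq> 2"
  shows "bij (\<lambda>r::('p, 'n::finite) Fpn. - (2 *s r))"
proof -
  have "inj (\<lambda>r::('p, 'n) Fpn. - (2 *s r))"
    using two_neq_zero_mod_ring[OF assms] by (intro injI) simp
  thus ?thesis by (simp add: bij_def finite_UNIV_inj_surj)
qed

lemma fourier_triple_sum_truncate:
  fixes a A :: "('p::prime_card, 'n::finite) Fpn \<Rightarrow> complex"
  assumes p: "CARD('p) \<noteq> 2"
    and A: "\<And>r. A r = (if P r then a r else 0)"
    and small: "\<And>r. \<not> P r \<Longrightarrow> cmod (a r) \<le> \<epsilon>"
    and eps: "\<epsilon> \<ge> 0"
  shows "cmod ((\<Sum>r\<in>UNIV. a r * a (- (2 *s r)) * a r) - (\<Sum>r\<in>UNIV. A r * A (- (2 *s r)) * A r))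
     \<le> 3 * \<epsilon> * (\<Sum>r\<in>UNIV. (cmod (a r))\<^sup>2)"
proof -
  define \<sigma> where "\<sigma> = (\<lambda>r::('p, 'n) Fpn. - (2 *s r))"
  define m where "m = (\<lambda>r. cmod (a r))"
  have m0: "m r \<ge> 0" for r unfolding m_def by simp
  have pt: "cmod (a r * a (\<sigma> r) * a r - A r * A (\<sigma> r) * A r) \<le> \<epsilon> * (m r * m (\<sigma> r) + (m r)\<^sup>2)" for r
  proof -
    have nrm: "cmod (a r * a (\<sigma> r) * a r) = m r * m (\<sigma> r) * m r"
      unfolding m_def by (simp add: norm_mult)
    consider "P r" "P (\<sigma> r)" | "P r" "\<not> P (\<sigma> r)" | "\<not> P r" by blast
    thus ?thesis
    proof cases
      case 1
      thus ?thesis using A[of r] A[of "\<sigma> r"] m0[of r] m0[of "\<sigma> r"] eps by simp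
    next
      case 2
      hence "m r * m (\<sigma> r) * m r \<le> m r * \<epsilon> * m r"
        using small[of "\<sigma> r"] m0[of r] unfolding m_def by (intro mult_right_mono mult_left_mono) auto
      moreover have "0 \<le> \<epsilon> * (m r * m (\<sigma> r))" using m0[of r] m0[of "\<sigma> r"] eps by simp
      ultimately show ?thesis using 2 nrm A[of r] A[of "\<sigma> r"]
        by (simp add: power2_eq_square algebra_simps)
    next
      case 3
      hence "m r * m (\<sigma> r) * m r \<le> \<epsilon> * m (\<sigma> r) * m r"
        using small[of r] m0[of r] m0[of "\<sigma> r"] unfolding m_def by (intro mult_right_mono) auto
      moreover have "0 \<le> \<epsilon> * (m r * m r)" using m0[of r] eps by simp
      ultimately show ?thesis using 3 nrm A[of r]
        by (simp add: power2_eq_square algebra_simps)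
    qed
  qed
  have "cmod ((\<Sum>r\<in>UNIV. a r * a (\<sigma> r) * a r) - (\<Sum>r\<in>UNIV. A r * A (\<sigma> r) * A r))
      \<le> (\<Sum>r\<in>UNIV. cmod (a r * a (\<sigma> r) * a r - A r * A (\<sigma> r) * A r))"
    unfolding sum_subtractf[symmetric] by (rule norm_sum)
  also have "\<dots> \<le> (\<Sum>r\<in>UNIV. \<epsilon> * ((m r)\<^sup>2 + (m (\<sigma> r))\<^sup>2 + (m r)\<^sup>2))"
  proof (intro sum_mono order.trans[OF pt] mult_left_mono eps)
    fix r
    show "m r * m (\<sigma> r) + (m r)\<^sup>2 \<le> (m r)\<^sup>2 + (m (\<sigma> r))\<^sup>2 + (m r)\<^sup>2"
      using sum_squares_bound[of "m r" "m (\<sigma> r)"] mult_nonneg_nonneg[OF m0[of r] m0[of "\<sigma> r"]]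
      by (simp add: power2_eq_square)
  qed
  also have "\<dots> = \<epsilon> * (2 * (\<Sum>r\<in>UNIV. (m r)\<^sup>2) + (\<Sum>r\<in>UNIV. (m (\<sigma> r))\<^sup>2))"
    by (simp add: sum_distrib_left[symmetric] sum.distrib)
  also have "(\<Sum>r\<in>UNIV. (m (\<sigma> r))\<^sup>2) = (\<Sum>r\<in>UNIV. (m r)\<^sup>2)"
    unfolding \<sigma>_def by (rule sum.reindex_bij_betw[OF bij_neg_scale_two[OF p]])
  finally show ?thesis unfolding \<sigma>_def m_def by (simp add: algebra_simps)
qed

section \<open>Restriction to cosets\<close>

definition coset_restrict ::
    "(('p::prime_card, 'n::finite) Fpn \<Rightarrow> real) \<Rightarrow> ('p, 'n) Fpn set \<Rightarrow> ('p, 'n) Fpn \<Rightarrow> ('p, 'n) Fpn \<Rightarrow> real" where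
  "coset_restrict u K g x = (if x - g \<in> K then u x else 0)"

definition coset_ap_count ::
    "(('p::prime_card, 'n::finite) Fpn \<Rightarrow> real) \<Rightarrow> ('p, 'n) Fpn set \<Rightarrow> ('p, 'n) Fpn \<Rightarrow> real" where
  "coset_ap_count u K g = (\<Sum>y\<in>K. \<Sum>d\<in>K. u (y + g) * u (y + g + d) * u (y + g + 2 *s d))"

lemma subspace_nonempty: "vec.subspace K \<Longrightarrow> K \<noteq> {}"
  using vec.subspace_0 by blast

lemma subspace_card_pos: "vec.subspace (K :: ('p::prime_card, 'n::finite) Fpn set) \<Longrightarrow> card K > 0"
  using vec.subspace_0 by (auto simp: card_gt_0_iff)

lemma sum_coset_indicator:
  "(\<Sum>x\<in>UNIV. if x - g \<in> K then \<phi> x else 0) = (\<Sum>y\<in>K. \<phi> (y + (g :: ('p::prime_card, 'n::finite) Fpn)))"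
proof -
  have "(\<Sum>x\<in>UNIV. if x - g \<in> K then \<phi> x else 0) = (\<Sum>x\<in>{x. x - g \<in> K}. \<phi> x)"
    by (simp add: sum.If_cases Collect_conv_if)
  also have "\<dots> = (\<Sum>y\<in>K. \<phi> (y + g))"
    by (rule sum.reindex_bij_witness[of _ "\<lambda>y. y + g" "\<lambda>x. x - g"]) auto
  finally show ?thesis .
qed

lemma coset_restrict_add:
  assumes K: "vec.subspace K" and x: "x - g \<in> K"
  shows "coset_restrict u K g (x + d) = (if d \<in> K then u (x + d) else 0)"
proof -
  have "x + d - g \<in> K \<longleftrightarrow> d \<in> K"
    using vec.subspace_add[OF K x, of d] vec.subspace_diff[OF K _ x, of "x + d - g"]
    by (auto simp: algebra_simps)
  thus ?thesis by (simp add: coset_restrict_def)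
qed

lemma coset_restrict_cong:
  assumes K: "vec.subspace K" and "q - g \<in> K"
  shows "coset_restrict u K q = coset_restrict u K g"
proof -
  have "x - q \<in> K \<longleftrightarrow> x - g \<in> K" for x
    using vec.subspace_add[OF K _ assms(2), of "x - q"] vec.subspace_diff[OF K _ assms(2), of "x - g"]
    by (auto simp: algebra_simps)
  thus ?thesis unfolding coset_restrict_def by auto
qed

lemma ap_count_coset_restrict:
  assumes K: "vec.subspace K"
  shows "ap_count (coset_restrict u K g) = coset_ap_count u K g"
proof -
  have "(\<Sum>d\<in>UNIV. coset_restrict u K g x * coset_restrict u K g (x + d) * coset_restrict u K g (x + 2 *s d))
      = (if x - g \<in> K then \<Sum>d\<in>K. u x * u (x + d) * u (x + 2 *s d) else 0)" for x
  proof (cases "x - g \<in> K")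
    case True
    have "coset_restrict u K g x = u x" using True by (simp add: coset_restrict_def)
    hence "coset_restrict u K g x * coset_restrict u K g (x + d) * coset_restrict u K g (x + 2 *s d)
        = (if d \<in> K then u x * u (x + d) * u (x + 2 *s d) else 0)" for d
      using vec.subspace_scale[OF K, of d 2] by (simp add: coset_restrict_add[OF K True])
    thus ?thesis using True by (simp add: sum.If_cases)
  qed (simp add: coset_restrict_def)
  thus ?thesis
    unfolding ap_count_def coset_ap_count_def by (simp add: sum_coset_indicator add_ac)
qed

lemma parseval_coset_restrict:
  fixes f :: "('p::prime_card, 'n::finite) Fpn \<Rightarrow> real"
  assumes f: "\<And>x. 0 \<le> f x \<and> f x \<le> 1"
  shows "(\<Sum>r\<in>UNIV. (cmod (fourier (coset_restrict f K g) r))\<^sup>2) \<le> real (card K) / real CARD(('p, 'n) Fpn)"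
proof -
  have "(\<Sum>x\<in>UNIV. (coset_restrict f K g x)\<^sup>2) \<le> (\<Sum>x\<in>UNIV. if x - g \<in> K then 1 else 0)"
    using f by (intro sum_mono) (auto simp: coset_restrict_def power_le_one)
  also have "\<dots> = real (card K)" by (simp add: sum_coset_indicator)
  finally show ?thesis by (simp add: parseval divide_right_mono)
qed

lemma coset_restrict_coset_density:
  assumes K: "vec.subspace K" and K': "vec.subspace K'" and "K' \<subseteq> K"
  shows "coset_restrict (coset_density f K') K g x = (\<Sum>y\<in>K'. coset_restrict f K g (y + x)) / real (card K')"
proof (cases "x - g \<in> K")
  case True
  thus ?thesis using \<open>K' \<subseteq> K\<close> coset_restrict_add[OF K True]
    by (auto simp: coset_restrict_def coset_density_def add.commute intro!: sum.cong)
next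
  case False
  have "coset_restrict f K g (y + x) = 0" if "y \<in> K'" for y
    using False vec.subspace_diff[OF K _ , of "y + x - g" y] that \<open>K' \<subseteq> K\<close>
    by (auto simp: coset_restrict_def algebra_simps)
  thus ?thesis using False by (simp add: coset_restrict_def)
qed

lemma fourier_coset_restrict_coset_density:
  fixes f :: "('p::prime_card, 'n::finite) Fpn \<Rightarrow> real"
  assumes K: "vec.subspace K" and K': "vec.subspace K'" and "K' \<subseteq> K"
  shows "fourier (coset_restrict (coset_density f K') K g) r =
     (if r \<in> annihilator K' then fourier (coset_restrict f K g) r else 0)"
proof -
  define u where "u = coset_restrict f K g"
  have shift: "(\<Sum>x\<in>UNIV. of_real (u (y + x)) * character r (- x)) =
      character r y * (\<Sum>b\<in>UNIV. of_real (u b) * character r (- b))" for y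
  proof -
    have "character r (- x) = character r (- (y + x)) * character r y" for x
      by (metis character_add_right add.commute add_diff_cancel_left' diff_conv_add_uminus minus_add_distrib)
    hence "(\<Sum>x\<in>UNIV. of_real (u (y + x)) * character r (- x)) =
        (\<Sum>x\<in>UNIV. (\<lambda>b. of_real (u b) * character r (- b) * character r y) (y + x))"
      by (simp add: mult.assoc)
    also have "\<dots> = (\<Sum>b\<in>UNIV. of_real (u b) * character r (- b) * character r y)"
      by (rule sum_UNIV_translate)
    finally show ?thesis by (simp add: sum_distrib_left mult_ac)
  qed
  have "fourier (coset_restrict (coset_density f K') K g) r =
     (\<Sum>x\<in>UNIV. \<Sum>y\<in>K'. of_real (u (y + x)) * character r (- x)) / (of_nat (card K') * of_nat CARD(('p, 'n) Fpn))"
    unfolding fourier_def coset_restrict_coset_density[OF assms] u_def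
    by (simp add: sum_distrib_right sum_divide_distrib[symmetric] divide_simps)
  also have "(\<Sum>x\<in>UNIV. \<Sum>y\<in>K'. of_real (u (y + x)) * character r (- x)) =
      (\<Sum>y\<in>K'. \<Sum>x\<in>UNIV. of_real (u (y + x)) * character r (- x))"
    by (rule sum.swap)
  also have "\<dots> = (\<Sum>y\<in>K'. character r y) * (\<Sum>b\<in>UNIV. of_real (u b) * character r (- b))"
    by (simp only: shift sum_distrib_right)
  finally show ?thesis
    using subspace_card_pos[OF K'] unfolding sum_character_subspace[OF K'] fourier_def u_def by auto
qed

lemma norm_fourier_coset_restrict_cong:
  assumes K: "vec.subspace K" and "r' - r \<in> annihilator K"
  shows "cmod (fourier (coset_restrict f K g) r') = cmod (fourier (coset_restrict f K g) r)"
proof -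
  have "of_real (coset_restrict f K g x) * character r' (- x) =
      of_real (coset_restrict f K g x) * character r (- x) * character (r' - r) (- g)" for x
  proof (cases "x - g \<in> K")
    case True
    hence "dotp (r' - r) (x - g) = 0" using assms(2) by (simp add: annihilator_def)
    hence "character (r' - r) (- x) = character (r' - r) (- g)"
      by (simp add: character_def dotp_diff_right dotp_neg_right)
    moreover have "character r' (- x) = character r (- x) * character (r' - r) (- x)"
      by (simp add: character_add_left[symmetric])
    ultimately show ?thesis by simp
  qed (simp add: coset_restrict_def)
  hence "fourier (coset_restrict f K g) r' = fourier (coset_restrict f K g) r * character (r' - r) (- g)"
    unfolding fourier_def by (simp only: sum_distrib_right times_divide_eq_left)
  thus ?thesis by (simp add: norm_mult)
qed

lemma coset_ap_count_smoothing_error: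
  fixes f :: "('p::prime_card, 'n::finite) Fpn \<Rightarrow> real"
  assumes p: "CARD('p) \<noteq> 2"
    and f: "\<And>x. 0 \<le> f x \<and> f x \<le> 1"
    and K: "vec.subspace K" and K': "vec.subspace K'" "K' \<subseteq> K"
    and eps: "\<epsilon> \<ge> 0"
    and small: "\<And>r. r \<notin> annihilator K' \<Longrightarrow> cmod (fourier (coset_restrict f K g) r) \<le> \<epsilon>"
  shows "\<bar>coset_ap_count f K g - coset_ap_count (coset_density f K') K g\<bar>
     \<le> 3 * \<epsilon> * real CARD(('p, 'n) Fpn) * real (card K)"
proof -
  define N where "N = CARD(('p, 'n) Fpn)"
  define a where "a = fourier (coset_restrict f K g)"
  define A where "A = fourier (coset_restrict (coset_density f K') K g)"
  have "cmod ((\<Sum>r\<in>UNIV. a r * a (- (2 *s r)) * a r) - (\<Sum>r\<in>UNIV. A r * A (- (2 *s r)) * A r))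
     \<le> 3 * \<epsilon> * (\<Sum>r\<in>UNIV. (cmod (a r))\<^sup>2)"
    unfolding A_def a_def
    by (rule fourier_triple_sum_truncate[OF p fourier_coset_restrict_coset_density[OF K K'] small eps])
  also have "\<dots> \<le> 3 * \<epsilon> * (real (card K) / real N)"
    unfolding a_def N_def using eps by (intro mult_left_mono parseval_coset_restrict[OF f]) auto
  finally have tb: "cmod ((\<Sum>r\<in>UNIV. a r * a (- (2 *s r)) * a r) - (\<Sum>r\<in>UNIV. A r * A (- (2 *s r)) * A r))
     \<le> 3 * \<epsilon> * (real (card K) / real N)" .
  have fourier_eq: "complex_of_real (coset_ap_count f K g - coset_ap_count (coset_density f K') K g) =
     (of_nat N)\<^sup>2 * ((\<Sum>r\<in>UNIV. a r * a (- (2 *s r)) * a r) - (\<Sum>r\<in>UNIV. A r * A (- (2 *s r)) * A r))"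
    unfolding ap_count_coset_restrict[OF K, symmetric] of_real_diff ap_count_fourier a_def A_def N_def
    by (simp add: right_diff_distrib)
  have "\<bar>coset_ap_count f K g - coset_ap_count (coset_density f K') K g\<bar> =
      (real N)\<^sup>2 * cmod ((\<Sum>r\<in>UNIV. a r * a (- (2 *s r)) * a r) - (\<Sum>r\<in>UNIV. A r * A (- (2 *s r)) * A r))"
    using arg_cong[OF fourier_eq, of cmod] by (simp only: norm_of_real norm_mult norm_power norm_of_nat)
  also have "\<dots> \<le> (real N)\<^sup>2 * (3 * \<epsilon> * (real (card K) / real N))"
    using tb by (intro mult_left_mono) auto
  also have "\<dots> = 3 * \<epsilon> * real N * real (card K)"
    by (simp add: N_def power2_eq_square field_simps)
  finally show ?thesis unfolding N_def .
qed

section \<open>Subspaces of \<open>\<bbbF>\<^sub>p\<^sup>n\<close>\<close>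

lemma card_Fpm: "card (Fpm m :: (nat \<Rightarrow> 'p::prime_card mod_ring) set) = CARD('p) ^ m"
proof -
  have "bij_betw (\<lambda>x. restrict x {..<m}) (Fpm m :: (nat \<Rightarrow> 'p mod_ring) set) (PiE {..<m} (\<lambda>_. UNIV))"
  proof (rule bij_betwI[where g="\<lambda>e i. if i < m then e i else 0"])
    fix e :: "nat \<Rightarrow> 'p mod_ring" assume "e \<in> PiE {..<m} (\<lambda>_. UNIV)"
    thus "restrict (\<lambda>i. if i < m then e i else 0) {..<m} = e"
      by (auto simp: fun_eq_iff PiE_def extensional_def)
  qed (auto simp: Fpm_def fun_eq_iff)
  hence "card (Fpm m :: (nat \<Rightarrow> 'p mod_ring) set) = card (PiE {..<m} (\<lambda>_. UNIV :: 'p mod_ring set))"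
    by (rule bij_betw_same_card)
  thus ?thesis by (simp add: card_PiE)
qed

lemma lincomb_eq_0_imp_coeffs_0:
  fixes e :: "nat \<Rightarrow> ('p::prime_card, 'n::finite) Fpn"
  assumes e: "bij_betw e {..<m} B" and B: "vec.independent B"
    and x: "(\<Sum>i<m. x i *s e i) = 0" and "i < m"
  shows "x i = 0"
proof -
  have "(\<Sum>v\<in>B. x (inv_into {..<m} e v) *s v) = (\<Sum>i<m. x (inv_into {..<m} e (e i)) *s e i)"
    using sum.reindex_bij_betw[OF e, of "\<lambda>v. x (inv_into {..<m} e v) *s v"] by simp
  also have "\<dots> = 0"
    using e x by (simp add: bij_betw_def)
  moreover have "\<forall>c. (\<Sum>v\<in>B. c v *s v) = 0 \<longrightarrow> (\<forall>v\<in>B. c v = 0)"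
    using B vec.independent_explicit by blast
  ultimately have "x (inv_into {..<m} e (e i)) = 0"
    using e \<open>i < m\<close> by (auto simp: bij_betw_def)
  thus ?thesis using e \<open>i < m\<close> by (simp add: bij_betw_def)
qed

lemma subspace_linear_param:
  fixes H :: "('p::prime_card, 'n::finite) Fpn set"
  assumes H: "vec.subspace H"
  obtains \<phi> :: "(nat \<Rightarrow> 'p mod_ring) \<Rightarrow> ('p, 'n) Fpn"
  where "bij_betw \<phi> (Fpm (vec.dim H)) H"
    and "\<And>x y. \<phi> (\<lambda>i. x i + y i) = \<phi> x + \<phi> y"
    and "\<And>c x. \<phi> (\<lambda>i. c * x i) = c *s \<phi> x"
proof -
  obtain B where B: "B \<subseteq> H" "vec.independent B" "H \<subseteq> vec.span B" "card B = vec.dim H"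
    by (rule vec.basis_exists)
  define m where "m = vec.dim H"
  have fB: "finite B" using B(2) vec.independent_explicit by blast
  obtain e where e: "bij_betw e {..<m} B"
    using ex_bij_betw_nat_finite[OF fB] B(4) m_def by (auto simp: atLeast0LessThan)
  define \<phi> where "\<phi> = (\<lambda>x::nat \<Rightarrow> 'p mod_ring. \<Sum>i<m. x i *s e i)"
  have add: "\<phi> (\<lambda>i. x i + y i) = \<phi> x + \<phi> y" for x y
    unfolding \<phi>_def by (simp add: vector_sadd_rdistrib sum.distrib)
  have scale: "\<phi> (\<lambda>i. c * x i) = c *s \<phi> x" for c x
    unfolding \<phi>_def by (simp add: vec.scale_sum_right vector_smult_assoc)
  have "inj_on \<phi> (Fpm m)"
  proof (rule inj_onI)
    fix x y assume "x \<in> Fpm m" "y \<in> Fpm m" "\<phi> x = \<phi> y"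
    hence "(\<Sum>i<m. (x i - y i) *s e i) = 0"
      unfolding \<phi>_def by (simp add: vector_sub_rdistrib sum_subtractf)
    hence "x i - y i = 0" if "i < m" for i
      by (rule lincomb_eq_0_imp_coeffs_0[OF e B(2) _ that])
    with \<open>x \<in> Fpm m\<close> \<open>y \<in> Fpm m\<close> show "x = y"
      unfolding Fpm_def fun_eq_iff by (metis (mono_tags) mem_Collect_eq not_le right_minus_eq)
  qed
  moreover have "\<phi> ` Fpm m = H"
  proof
    have "e i \<in> H" if "i < m" for i using e B(1) that by (auto simp: bij_betw_def)
    thus "\<phi> ` Fpm m \<subseteq> H"
      unfolding \<phi>_def by (auto intro!: vec.subspace_sum[OF H] vec.subspace_scale[OF H])
    show "H \<subseteq> \<phi> ` Fpm m"
    proof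
      fix y assume "y \<in> H"
      then obtain u where u: "y = (\<Sum>v\<in>B. u v *s v)" using B(3) vec.span_finite[OF fB] by blast
      define x where "x = (\<lambda>i. if i < m then u (e i) else 0)"
      have "\<phi> x = (\<Sum>i<m. u (e i) *s e i)" unfolding \<phi>_def x_def by simp
      also have "\<dots> = y" using u sum.reindex_bij_betw[OF e, of "\<lambda>v. u v *s v"] by simp
      finally show "y \<in> \<phi> ` Fpm m" unfolding x_def Fpm_def by (auto intro!: image_eqI)
    qed
  qed
  ultimately show thesis using that[of \<phi>] add scale by (simp add: bij_betw_def m_def)
qed

lemma card_subspace:
  fixes H :: "('p::prime_card, 'n::finite) Fpn set"
  assumes "vec.subspace H"
  shows "card H = CARD('p) ^ vec.dim H"
proof -
  obtain \<phi> :: "(nat \<Rightarrow> 'p mod_ring) \<Rightarrow> ('p, 'n) Fpn" where "bij_betw \<phi> (Fpm (vec.dim H)) H"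
    by (rule subspace_linear_param[OF assms])
  hence "card H = card (Fpm (vec.dim H) :: (nat \<Rightarrow> 'p mod_ring) set)"
    by (rule bij_betw_same_card[symmetric])
  also have "\<dots> = CARD('p) ^ vec.dim H" by (rule card_Fpm)
  finally show ?thesis .
qed

lemma dim_le_CARD: "vec.dim (S :: ('p::prime_card, 'n::finite) Fpn set) \<le> CARD('n)"
  using vec.dim_subset_UNIV[of S] unfolding vec.dimension_def card_cart_basis .

lemma subspace_annihilated_part:
  assumes "vec.subspace (H :: ('p::prime_card, 'n::finite) Fpn set)"
  shows "vec.subspace {y\<in>H. \<forall>r\<in>R. dotp r y = 0}"
  using vec.subspace_0[OF assms] vec.subspace_add[OF assms] vec.subspace_scale[OF assms]
  by (auto simp: vec.subspace_def dotp_add_right dotp_scale_right)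

lemma dim_le_dim_kernel_Suc:
  fixes K :: "('p::prime_card, 'n::finite) Fpn set"
  assumes K: "vec.subspace K"
  shows "vec.dim K \<le> vec.dim {y\<in>K. dotp r y = 0} + 1"
proof (cases "\<forall>y\<in>K. dotp r y = 0")
  case True
  hence "{y\<in>K. dotp r y = 0} = K" by auto
  thus ?thesis by simp
next
  case False
  then obtain y0 where y0: "y0 \<in> K" "dotp r y0 \<noteq> 0" by blast
  define K0 where "K0 = {y\<in>K. dotp r y = 0}"
  have "y \<in> vec.span (insert y0 K0)" if y: "y \<in> K" for y
  proof -
    define c where "c = dotp r y / dotp r y0"
    have "y - c *s y0 \<in> K0"
      using y y0 vec.subspace_diff[OF K y vec.subspace_scale[OF K y0(1)]]
      by (simp add: K0_def c_def dotp_diff_right dotp_scale_right)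
    hence "(y - c *s y0) + c *s y0 \<in> vec.span (insert y0 K0)"
      by (intro vec.span_add) (simp_all add: vec.span_base vec.span_scale)
    thus ?thesis by simp
  qed
  hence "vec.dim K \<le> vec.dim (vec.span (insert y0 K0))" by (intro vec.dim_subset subsetI)
  also have "\<dots> = vec.dim (insert y0 K0)" by simp
  also have "\<dots> \<le> vec.dim K0 + 1" by (simp add: vec.dim_insert)
  finally show ?thesis unfolding K0_def .
qed

lemma dim_le_dim_annihilated_part:
  fixes H :: "('p::prime_card, 'n::finite) Fpn set"
  assumes H: "vec.subspace H" and "finite R"
  shows "vec.dim H \<le> vec.dim {y\<in>H. \<forall>r\<in>R. dotp r y = 0} + card R"
  using \<open>finite R\<close>
proof (induct R rule: finite_induct)
  case (insert r R)
  define K where "K = {y\<in>H. \<forall>r\<in>R. dotp r y = 0}"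
  have "{y\<in>H. \<forall>r'\<in>insert r R. dotp r' y = 0} = {y\<in>K. dotp r y = 0}"
    unfolding K_def by auto
  moreover have "vec.dim K \<le> vec.dim {y\<in>K. dotp r y = 0} + 1"
    unfolding K_def by (rule dim_le_dim_kernel_Suc[OF subspace_annihilated_part[OF H]])
  ultimately show ?case using insert unfolding K_def by simp
qed simp

section \<open>The large spectrum\<close>

definition functional_on :: "('p::prime_card, 'n::finite) Fpn set \<Rightarrow> ('p, 'n) Fpn \<Rightarrow> ('p, 'n) Fpn \<Rightarrow> 'p mod_ring" where
  "functional_on H r = restrict (dotp r) H"

lemma functional_on_eq_iff: "functional_on H r' = functional_on H r \<longleftrightarrow> r' - r \<in> annihilator H"
proof -
  have "functional_on H r' = functional_on H r \<longleftrightarrow> (\<forall>y\<in>H. dotp r' y = dotp r y)"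
    unfolding functional_on_def by (metis restrict_apply' restrict_ext)
  thus ?thesis by (simp add: annihilator_def dotp_diff_left)
qed

lemma card_functional_on_fiber: "card {r'. functional_on H r' = functional_on H r} = card (annihilator H)"
proof -
  have "bij_betw (\<lambda>h. r + h) (annihilator H) {r'. functional_on H r' = functional_on H r}"
    by (rule bij_betwI[where g="\<lambda>r'. r' - r"]) (auto simp: functional_on_eq_iff)
  from bij_betw_same_card[OF this] show ?thesis ..
qed

lemma card_functional_on_saturated:
  assumes "\<And>r r'. r \<in> S \<Longrightarrow> functional_on H r' = functional_on H r \<Longrightarrow> r' \<in> S"
  shows "card S = card (functional_on H ` S) * card (annihilator H)"
proof -
  have "card S = (\<Sum>\<phi>\<in>functional_on H ` S. card {r\<in>S. functional_on H r = \<phi>})"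
    using card_eq_sum sum.image_gen[of S "\<lambda>_. 1::nat" "functional_on H"] by simp
  also have "\<dots> = (\<Sum>\<phi>\<in>functional_on H ` S. card (annihilator H))"
  proof (rule sum.cong[OF refl])
    fix \<phi> assume "\<phi> \<in> functional_on H ` S"
    then obtain r where "r \<in> S" "\<phi> = functional_on H r" by blast
    hence "{r'\<in>S. functional_on H r' = \<phi>} = {r'. functional_on H r' = functional_on H r}"
      using assms by auto
    thus "card {r'\<in>S. functional_on H r' = \<phi>} = card (annihilator H)"
      by (simp add: card_functional_on_fiber)
  qed
  finally show ?thesis by simp
qed

lemma card_range_functional_on_le:
  fixes H :: "('p::prime_card, 'n::finite) Fpn set"
  assumes H: "vec.subspace H"
  shows "card (range (functional_on H)) \<le> card H"
proof -
  obtain B where B: "B \<subseteq> H" "vec.independent B" "H \<subseteq> vec.span B" "card B = vec.dim H"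
    by (rule vec.basis_exists)
  have fB: "finite B" using B(2) vec.independent_explicit by blast
  define \<kappa> where "\<kappa> = (\<lambda>r. restrict (dotp r) B)"
  have det: "functional_on H r = functional_on H r'" if "\<kappa> r = \<kappa> r'" for r r'
  proof -
    have onB: "dotp r v = dotp r' v" if "v \<in> B" for v
      using fun_cong[OF \<open>\<kappa> r = \<kappa> r'\<close>, of v] that by (simp add: \<kappa>_def)
    have "dotp r y = dotp r' y" if "y \<in> H" for y
    proof -
      obtain u where "y = (\<Sum>v\<in>B. u v *s v)"
        using \<open>y \<in> H\<close> B(3) vec.span_finite[OF fB] by blast
      thus ?thesis using onB by (simp add: dotp_sum_right dotp_scale_right)
    qed
    thus ?thesis unfolding functional_on_def by (intro restrict_ext) simp
  qed
  have "range (functional_on H) = (\<lambda>k. functional_on H (SOME r. \<kappa> r = k)) ` range \<kappa>"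
  proof -
    have "functional_on H r = functional_on H (SOME r'. \<kappa> r' = \<kappa> r)" for r
      by (rule det) (metis (mono_tags) someI)
    thus ?thesis by (auto simp: image_image)
  qed
  hence "card (range (functional_on H)) \<le> card (range \<kappa>)" by (simp add: card_image_le)
  also have "\<dots> \<le> card (PiE B (\<lambda>_. UNIV :: 'p mod_ring set))"
    by (rule card_mono) (auto simp: \<kappa>_def fB finite_PiE)
  also have "\<dots> = card H" using card_subspace[OF H] B(4) by (simp add: card_PiE fB)
  finally show ?thesis .
qed

lemma card_UNIV_le_card_mult_annihilator:
  fixes H :: "('p::prime_card, 'n::finite) Fpn set"
  assumes "vec.subspace H"
  shows "CARD(('p, 'n) Fpn) \<le> card H * card (annihilator H)"
  using card_functional_on_saturated[of UNIV H] card_range_functional_on_le[OF assms] by simp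

definition large_spectrum ::
    "(('p::prime_card, 'n::finite) Fpn \<Rightarrow> real) \<Rightarrow> ('p, 'n) Fpn set \<Rightarrow> real \<Rightarrow> ('p, 'n) Fpn \<Rightarrow> ('p, 'n) Fpn set" where
  "large_spectrum f H \<epsilon> g = {r. \<epsilon> < cmod (fourier (coset_restrict f H g) r)}"

lemma card_large_spectrum:
  fixes f :: "('p::prime_card, 'n::finite) Fpn \<Rightarrow> real"
  assumes f: "\<And>x. 0 \<le> f x \<and> f x \<le> 1" and eps: "\<epsilon> > 0"
  shows "real (card (large_spectrum f H \<epsilon> g)) * \<epsilon>\<^sup>2 \<le> real (card H) / real CARD(('p, 'n) Fpn)"
proof -
  have "real (card (large_spectrum f H \<epsilon> g)) * \<epsilon>\<^sup>2
      \<le> (\<Sum>r\<in>large_spectrum f H \<epsilon> g. (cmod (fourier (coset_restrict f H g) r))\<^sup>2)"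
    by (rule sum_bounded_below) (use eps in \<open>auto simp: large_spectrum_def intro!: power_mono\<close>)
  also have "\<dots> \<le> (\<Sum>r\<in>UNIV. (cmod (fourier (coset_restrict f H g) r))\<^sup>2)"
    by (intro sum_mono2) auto
  also have "\<dots> \<le> real (card H) / real CARD(('p, 'n) Fpn)" by (rule parseval_coset_restrict[OF f])
  finally show ?thesis .
qed

lemma card_functional_on_large_spectrum:
  fixes f :: "('p::prime_card, 'n::finite) Fpn \<Rightarrow> real"
  assumes f: "\<And>x. 0 \<le> f x \<and> f x \<le> 1" and eps: "\<epsilon> > 0" and H: "vec.subspace H"
  shows "real (card (functional_on H ` large_spectrum f H \<epsilon> g))
     \<le> (real (card H))\<^sup>2 / ((real CARD(('p, 'n) Fpn))\<^sup>2 * \<epsilon>\<^sup>2)"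
proof -
  define N M A where "N = real CARD(('p, 'n) Fpn)" and "M = real (card H)"
    and "A = real (card (annihilator H))"
  define S where "S = large_spectrum f H \<epsilon> g"
  have M0: "M > 0" unfolding M_def using subspace_card_pos[OF H] by simp
  have N0: "N > 0" unfolding N_def by simp
  have "real (card S) = real (card (functional_on H ` S)) * A"
    unfolding A_def S_def large_spectrum_def
    by (subst card_functional_on_saturated)
       (auto simp: functional_on_eq_iff norm_fourier_coset_restrict_cong[OF H])
  moreover have "N \<le> M * A"
    unfolding N_def M_def A_def of_nat_mult[symmetric] of_nat_le_iff
    by (rule card_UNIV_le_card_mult_annihilator[OF H])
  hence "N / M \<le> A" using M0 by (simp add: divide_le_eq mult.commute)
  ultimately have "real (card (functional_on H ` S)) * (N / M) * \<epsilon>\<^sup>2 \<le> real (card S) * \<epsilon>\<^sup>2"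
    by (simp only:) (intro mult_left_mono mult_right_mono; simp)
  also have "\<dots> \<le> M / N"
    unfolding S_def M_def N_def by (rule card_large_spectrum[OF f eps])
  finally have "real (card (functional_on H ` S)) * (N / M) * \<epsilon>\<^sup>2 * (M * N) \<le> M / N * (M * N)"
    using M0 N0 by (intro mult_right_mono) auto
  hence "real (card (functional_on H ` S)) * (N\<^sup>2 * \<epsilon>\<^sup>2) \<le> M\<^sup>2"
    using M0 N0 by (simp add: power2_eq_square mult_ac)
  thus ?thesis unfolding S_def M_def[symmetric] N_def[symmetric]
    using N0 eps by (simp add: pos_le_divide_eq)
qed

lemma card_UN_translation_invariant:
  fixes A :: "('p::prime_card, 'n::finite) Fpn \<Rightarrow> 'a set"
  assumes H: "vec.subspace H" and inv: "\<And>g h. h \<in> H \<Longrightarrow> A (g + h) = A g"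
    and fin: "\<And>g. finite (A g)"
  shows "card (\<Union>g. A g) * card H \<le> (\<Sum>g\<in>UNIV. card (A g))"
proof -
  have "card H \<le> card {g. a \<in> A g}" if a: "a \<in> (\<Union>g. A g)" for a
  proof -
    obtain g0 where "a \<in> A g0" using a by blast
    hence "(\<lambda>h. g0 + h) ` H \<subseteq> {g. a \<in> A g}" using inv by auto
    hence "card ((\<lambda>h. g0 + h) ` H) \<le> card {g. a \<in> A g}" by (intro card_mono) simp_all
    thus ?thesis by (simp add: card_image)
  qed
  hence "card (\<Union>g. A g) * card H \<le> (\<Sum>a\<in>(\<Union>g. A g). card {g. a \<in> A g})"
    using sum_bounded_below[of "\<Union>g. A g" "card H"] by (simp add: mult.commute)
  also have "\<dots> = (\<Sum>a\<in>(\<Union>g. A g). \<Sum>g\<in>UNIV. of_bool (a \<in> A g))"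
    by (simp add: sum_of_bool_eq)
  also have "\<dots> = (\<Sum>g\<in>UNIV. \<Sum>a\<in>(\<Union>g. A g). of_bool (a \<in> A g))"
    by (rule sum.swap)
  also have "\<dots> = (\<Sum>g\<in>UNIV. card (A g))"
    using fin by (simp add: sum_of_bool_eq Int_absorb1 Int_def[symmetric] UN_upper)
  finally show ?thesis .
qed

lemma exists_annihilated_subspace:
  fixes H :: "('p::prime_card, 'n::finite) Fpn set"
  assumes H: "vec.subspace H"
  obtains H' where "vec.subspace H'" "H' \<subseteq> H" "S \<subseteq> annihilator H'"
    "vec.dim H \<le> vec.dim H' + card (functional_on H ` S)"
proof -
  define R where "R = inv_into S (functional_on H) ` functional_on H ` S"
  have "card R = card (functional_on H ` S)"
    unfolding R_def by (rule card_image[OF inj_on_inv_into]) simp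
  have rep: "\<exists>r0\<in>R. functional_on H r0 = functional_on H r" if "r \<in> S" for r
    using that unfolding R_def
    by (intro bexI[of _ "inv_into S (functional_on H) (functional_on H r)"]) (auto simp: f_inv_into_f)
  define H' where "H' = {y\<in>H. \<forall>r\<in>R. dotp r y = 0}"
  have "vec.dim H \<le> vec.dim H' + card (functional_on H ` S)"
    unfolding H'_def \<open>card R = _\<close>[symmetric] by (rule dim_le_dim_annihilated_part[OF H]) (simp add: R_def)
  moreover have "S \<subseteq> annihilator H'"
  proof
    fix r assume "r \<in> S"
    then obtain r0 where "r0 \<in> R" "functional_on H r0 = functional_on H r" using rep by blast
    moreover from this have "r - r0 \<in> annihilator H" using functional_on_eq_iff[of H r r0] by simp
    ultimately show "r \<in> annihilator H'"
      unfolding annihilator_def H'_def by (auto simp: dotp_diff_left)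
  qed
  ultimately show thesis using that[of H'] subspace_annihilated_part[OF H] unfolding H'_def by blast
qed

lemma card_functional_on_all_large_spectra:
  fixes f :: "('p::prime_card, 'n::finite) Fpn \<Rightarrow> real"
  assumes f: "\<And>x. 0 \<le> f x \<and> f x \<le> 1" and eps: "\<epsilon> > 0" and H: "vec.subspace H"
  shows "real (card (functional_on H ` (\<Union>g. large_spectrum f H \<epsilon> g)))
    \<le> real (card H) / (real CARD(('p, 'n) Fpn) * \<epsilon>\<^sup>2)"
proof -
  define N M where "N = real CARD(('p, 'n) Fpn)" and "M = real (card H)"
  define A where "A = (\<lambda>g. functional_on H ` large_spectrum f H \<epsilon> g)"
  have M0: "M > 0" unfolding M_def using subspace_card_pos[OF H] by simp
  have "A (g + h) = A g" if "h \<in> H" for g h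
    using coset_restrict_cong[OF H, of "g + h" g] that by (simp add: A_def large_spectrum_def)
  hence "card (\<Union>g. A g) * card H \<le> (\<Sum>g\<in>UNIV. card (A g))"
    by (intro card_UN_translation_invariant[OF H]) simp_all
  hence "real (card (\<Union>g. A g)) * M \<le> (\<Sum>g\<in>UNIV. real (card (A g)))"
    unfolding M_def by (metis of_nat_le_iff of_nat_mult of_nat_sum)
  also have "\<dots> \<le> (\<Sum>g\<in>(UNIV :: ('p, 'n) Fpn set). M\<^sup>2 / (N\<^sup>2 * \<epsilon>\<^sup>2))"
    unfolding A_def M_def N_def by (intro sum_mono card_functional_on_large_spectrum[OF f eps H])
  also have "\<dots> = M / (N * \<epsilon>\<^sup>2) * M"
    by (simp add: N_def power2_eq_square)
  finally have "real (card (\<Union>g. A g)) \<le> M / (N * \<epsilon>\<^sup>2)"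
    using M0 by (rule mult_right_le_imp_le)
  thus ?thesis unfolding A_def M_def N_def image_UN .
qed

lemma exists_subspace_annihilating_large_spectrum:
  fixes f :: "('p::prime_card, 'n::finite) Fpn \<Rightarrow> real"
  assumes f: "\<And>x. 0 \<le> f x \<and> f x \<le> 1" and eps: "\<epsilon> > 0" and H: "vec.subspace H"
  obtains H' where "vec.subspace H'" "H' \<subseteq> H"
    "real (vec.dim H) \<le> real (vec.dim H') + real (card H) / (real CARD(('p, 'n) Fpn) * \<epsilon>\<^sup>2)"
    "\<And>g r. r \<notin> annihilator H' \<Longrightarrow> cmod (fourier (coset_restrict f H g) r) \<le> \<epsilon>"
proof -
  obtain H' where H': "vec.subspace H'" "H' \<subseteq> H"
    and ann: "(\<Union>g. large_spectrum f H \<epsilon> g) \<subseteq> annihilator H'"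
    and dim: "vec.dim H \<le> vec.dim H' + card (functional_on H ` (\<Union>g. large_spectrum f H \<epsilon> g))"
    by (rule exists_annihilated_subspace[OF H])
  show thesis
  proof (rule that[OF H'])
    show "real (vec.dim H) \<le> real (vec.dim H') + real (card H) / (real CARD(('p, 'n) Fpn) * \<epsilon>\<^sup>2)"
      using dim card_functional_on_all_large_spectra[of f, OF f eps H] by linarith
    show "cmod (fourier (coset_restrict f H g) r) \<le> \<epsilon>" if "r \<notin> annihilator H'" for g r
    proof -
      have "r \<notin> large_spectrum f H \<epsilon> g" using that ann by blast
      thus ?thesis by (simp add: large_spectrum_def)
    qed
  qed
qed

section \<open>Supersaturation on a coset\<close>

lemma sum_cube_le_card_sq_mult_sum_cubes:
  fixes u :: "'a \<Rightarrow> real"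
  assumes "finite A" and u: "\<And>x. x \<in> A \<Longrightarrow> u x \<ge> 0"
  shows "(sum u A)^3 \<le> (real (card A))\<^sup>2 * (\<Sum>x\<in>A. (u x)^3)"
proof (cases "A = {}")
  case False
  define k where "k = real (card A)"
  have k: "k > 0" unfolding k_def using \<open>finite A\<close> False by (simp add: card_gt_0_iff)
  define \<mu> where "\<mu> = sum u A / k"
  have \<mu>: "\<mu> \<ge> 0" unfolding \<mu>_def using u k by (simp add: sum_nonneg)
  \<comment> \<open>the tangent line of \<open>x\<^sup>3\<close> at \<open>\<mu>\<close> lies below the cube on \<open>x \<ge> 0\<close>\<close>
  have "3 * \<mu>\<^sup>2 * u x - 2 * \<mu>^3 \<le> (u x)^3" if "x \<in> A" for x
  proof -
    have "0 \<le> (u x - \<mu>)\<^sup>2 * (u x + 2 * \<mu>)" using u[OF that] \<mu> by simp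
    thus ?thesis by (simp add: power2_eq_square power3_eq_cube algebra_simps)
  qed
  hence tangent: "(\<Sum>x\<in>A. 3 * \<mu>\<^sup>2 * u x - 2 * \<mu>^3) \<le> (\<Sum>x\<in>A. (u x)^3)" by (rule sum_mono)
  have sum_u: "sum u A = \<mu> * k" unfolding \<mu>_def using k by simp
  have "(\<Sum>x\<in>A. 3 * \<mu>\<^sup>2 * u x - 2 * \<mu>^3) = 3 * \<mu>\<^sup>2 * sum u A - 2 * \<mu>^3 * k"
    by (simp add: sum_subtractf sum_distrib_left k_def)
  also have "\<dots> = \<mu>^3 * k" unfolding sum_u by (simp add: power2_eq_square power3_eq_cube)
  finally have "\<mu>^3 * k \<le> (\<Sum>x\<in>A. (u x)^3)" using tangent by simp
  hence "k\<^sup>2 * (\<mu>^3 * k) \<le> k\<^sup>2 * (\<Sum>x\<in>A. (u x)^3)" by (simp add: mult_left_mono)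
  moreover have "(sum u A)^3 = k\<^sup>2 * (\<mu>^3 * k)"
    unfolding sum_u by (simp add: power2_eq_square power3_eq_cube)
  ultimately show ?thesis unfolding k_def by simp
qed simp

lemma card_3aps_in_subspace_ge:
  fixes H X :: "('p::prime_card, 'n::finite) Fpn set"
  assumes C: "three_AP_const TYPE('p) C" and H: "vec.subspace H" and dim: "vec.dim H \<ge> 1" and "X \<subseteq> H"
  shows "(real (card X) / real (card H)) powr C * (real (card H))\<^sup>2
    \<le> real (card {(y, d). y \<in> H \<and> d \<in> H \<and> y \<in> X \<and> y + d \<in> X \<and> y + 2 *s d \<in> X})"
proof -
  obtain \<phi> :: "(nat \<Rightarrow> 'p mod_ring) \<Rightarrow> ('p, 'n) Fpn"
    where bij: "bij_betw \<phi> (Fpm (vec.dim H)) H" and add: "\<And>x y. \<phi> (\<lambda>i. x i + y i) = \<phi> x + \<phi> y"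
      and scale: "\<And>c x. \<phi> (\<lambda>i. c * x i) = c *s \<phi> x"
    using subspace_linear_param[OF H] by metis
  define m where "m = vec.dim H"
  have inj: "inj_on \<phi> (Fpm m)" and img: "\<phi> ` Fpm m = H" using bij by (simp_all add: bij_betw_def m_def)
  define X' where "X' = {z\<in>Fpm m. \<phi> z \<in> X}"
  have "\<phi> ` X' = X"
  proof
    show "X \<subseteq> \<phi> ` X'"
    proof
      fix y assume "y \<in> X"
      then obtain z where "z \<in> Fpm m" "y = \<phi> z" using img \<open>X \<subseteq> H\<close> by blast
      with \<open>y \<in> X\<close> show "y \<in> \<phi> ` X'" unfolding X'_def by blast
    qed
  qed (auto simp: X'_def)
  moreover have "inj_on \<phi> X'" using inj by (rule inj_on_subset) (simp add: X'_def)
  ultimately have cX: "card X' = card X" by (metis card_image)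
  define P' where "P' = {(z, d). z \<in> Fpm m \<and> d \<in> Fpm m \<and> z \<in> X' \<and> (\<lambda>i. z i + d i) \<in> X' \<and> (\<lambda>i. z i + 2 * d i) \<in> X'}"
  have "card P' \<le> card {(y, d). y \<in> H \<and> d \<in> H \<and> y \<in> X \<and> y + d \<in> X \<and> y + 2 *s d \<in> X}"
  proof (rule card_inj_on_le[where f="map_prod \<phi> \<phi>"])
    show "inj_on (map_prod \<phi> \<phi>) P'"
      by (rule inj_on_subset[OF map_prod_inj_on[OF inj inj]]) (auto simp: P'_def)
    show "map_prod \<phi> \<phi> ` P' \<subseteq> {(y, d). y \<in> H \<and> d \<in> H \<and> y \<in> X \<and> y + d \<in> X \<and> y + 2 *s d \<in> X}"
    proof clarify
      fix z d assume "(z, d) \<in> P'"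
      hence "z \<in> Fpm m" "d \<in> Fpm m" "\<phi> z \<in> X" "\<phi> (\<lambda>i. z i + d i) \<in> X" "\<phi> (\<lambda>i. z i + 2 * d i) \<in> X"
        unfolding P'_def X'_def by auto
      moreover have "\<phi> (\<lambda>i. z i + 2 * d i) = \<phi> z + 2 *s \<phi> d"
        using add[of z "\<lambda>i. 2 * d i"] scale[of 2 d] by simp
      ultimately show "\<phi> z \<in> H \<and> \<phi> d \<in> H \<and> \<phi> z \<in> X \<and> \<phi> z + \<phi> d \<in> X \<and> \<phi> z + 2 *s \<phi> d \<in> X"
        using img \<open>X \<subseteq> H\<close> by (auto simp: add)
    qed
  qed simp
  moreover have "X' \<subseteq> Fpm m" unfolding X'_def by blast
  hence "(real (card X') / real CARD('p) ^ m) powr C * real CARD('p) ^ (2 * m) \<le> real (card P')"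
    using C dim unfolding three_AP_const_def P'_def m_def by blast
  moreover have "real (card H) = real CARD('p) ^ m" unfolding m_def by (simp add: card_subspace[OF H])
  moreover have "real CARD('p) ^ (2 * m) = (real CARD('p) ^ m)\<^sup>2" by (simp add: power_mult mult.commute)
  ultimately show ?thesis unfolding cX by simp
qed

lemma coset_ap_count_ge_level_set_aps:
  assumes F: "\<And>x. F x \<ge> 0" and t: "t \<ge> 0" and X: "\<And>y. y \<in> X \<Longrightarrow> t \<le> F (y + g)"
  shows "t^3 * real (card {(y, d). y \<in> H \<and> d \<in> H \<and> y \<in> X \<and> y + d \<in> X \<and> y + 2 *s d \<in> X})
    \<le> coset_ap_count F H (g :: ('p::prime_card, 'n::finite) Fpn)"
proof -
  define P where "P = {(y, d). y \<in> H \<and> d \<in> H \<and> y \<in> X \<and> y + d \<in> X \<and> y + 2 *s d \<in> X}"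
  have "t^3 * real (card P) = (\<Sum>(y, d)\<in>P. t * t * t)" by (simp add: power3_eq_cube)
  also have "\<dots> \<le> (\<Sum>(y, d)\<in>P. F (y + g) * F (y + g + d) * F (y + g + 2 *s d))"
  proof (rule sum_mono)
    fix q assume "q \<in> P"
    then obtain y d where "q = (y, d)" "y \<in> X" "y + d \<in> X" "y + 2 *s d \<in> X" unfolding P_def by blast
    thus "(case q of (y, d) \<Rightarrow> t * t * t) \<le> (case q of (y, d) \<Rightarrow> F (y + g) * F (y + g + d) * F (y + g + 2 *s d))"
      using X[of y] X[of "y + d"] X[of "y + 2 *s d"] t by (simp add: mult_mono add_ac)
  qed
  also have "\<dots> \<le> (\<Sum>(y, d)\<in>H \<times> H. F (y + g) * F (y + g + d) * F (y + g + 2 *s d))"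
    using F by (intro sum_mono2) (auto simp: P_def)
  also have "\<dots> = coset_ap_count F H g"
    by (simp add: coset_ap_count_def sum.cartesian_product)
  finally show ?thesis unfolding P_def .
qed

lemma level_set_cube_mass:
  fixes F :: "('p::prime_card, 'n::finite) Fpn \<Rightarrow> real"
  assumes F: "\<And>x. F x \<ge> 0"
  shows "(real (card H) * coset_density F H g / 2)^3
    \<le> (real (card {y\<in>H. coset_density F H g / 2 \<le> F (y + g)}))\<^sup>2 * (\<Sum>y\<in>H. (F (y + g))^3)"
proof -
  define a X where "a = coset_density F H g" and "X = {y\<in>H. a / 2 \<le> F (y + g)}"
  have a: "a \<ge> 0" unfolding a_def coset_density_def using F by (simp add: sum_nonneg)
  have "(\<Sum>y\<in>H. F (y + g)) = real (card H) * a"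
    unfolding a_def coset_density_def by (cases "H = {}") simp_all
  moreover have "(\<Sum>y\<in>H - X. F (y + g)) \<le> real (card H) * (a / 2)"
  proof -
    have "(\<Sum>y\<in>H - X. F (y + g)) \<le> real (card (H - X)) * (a / 2)"
      by (rule sum_bounded_above) (auto simp: X_def not_le)
    also have "\<dots> \<le> real (card H) * (a / 2)" using a by (intro mult_right_mono) (simp_all add: card_mono)
    finally show ?thesis .
  qed
  moreover have "(\<Sum>y\<in>H. F (y + g)) = (\<Sum>y\<in>X. F (y + g)) + (\<Sum>y\<in>H - X. F (y + g))"
    by (simp add: X_def sum.subset_diff[of X H])
  ultimately have "real (card H) * a / 2 \<le> (\<Sum>y\<in>X. F (y + g))" by simp
  hence "(real (card H) * a / 2)^3 \<le> (\<Sum>y\<in>X. F (y + g))^3" using a by (intro power_mono) auto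
  also have "\<dots> \<le> (real (card X))\<^sup>2 * (\<Sum>y\<in>X. (F (y + g))^3)"
    using F by (intro sum_cube_le_card_sq_mult_sum_cubes) simp_all
  also have "\<dots> \<le> (real (card X))\<^sup>2 * (\<Sum>y\<in>H. (F (y + g))^3)"
    using F by (intro mult_left_mono sum_mono2) (auto simp: X_def)
  finally show ?thesis unfolding a_def X_def .
qed

lemma sq_le_powr_of_powr_le:
  fixes s K C :: real
  assumes s: "s \<ge> 0" and C: "C > 0" and K: "K > 0" and sC: "s powr C \<le> K"
  shows "s\<^sup>2 \<le> K powr (2 / C)"
proof -
  have "s = (s powr C) powr (1 / C)" using s C by (simp add: powr_powr)
  also have "\<dots> \<le> K powr (1 / C)" using sC s C by (intro powr_mono2) auto
  finally have "s\<^sup>2 \<le> (K powr (1 / C))\<^sup>2" using s by (intro power_mono) auto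
  also have "\<dots> = (K powr (1 / C)) powr (real 2)" using K by (subst powr_realpow) auto
  also have "\<dots> = K powr (2 / C)" by (simp add: powr_powr)
  finally show ?thesis .
qed

lemma coset_cube_mass_ge:
  fixes F :: "('p::prime_card, 'n::finite) Fpn \<Rightarrow> real"
  assumes H: "vec.subspace H" and dim: "vec.dim H \<ge> 1"
    and C: "C > 0" "three_AP_const TYPE('p) C" and F: "\<And>x. F x \<ge> 0"
    and a: "coset_density F H g > 0" and \<theta>: "\<theta> > 0"
    and T: "coset_ap_count F H g \<le> \<theta> * (coset_density F H g)^3 * (real (card H))\<^sup>2"
  shows "(coset_density F H g)^3 / 8 * (8 * \<theta>) powr (- 2 / C) \<le> (\<Sum>y\<in>H. (F (y + g))^3) / real (card H)"
proof -
  define a M where "a = coset_density F H g" and "M = real (card H)"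
  define X where "X = {y\<in>H. a / 2 \<le> F (y + g)}"
  define s where "s = real (card X) / M"
  have M: "M > 0" unfolding M_def using subspace_card_pos[OF H] by simp
  have s: "s \<ge> 0" unfolding s_def using M by simp
  have "(a / 2)^3 * (s powr C * M\<^sup>2) \<le> (a / 2)^3 * real (card {(y, d). y \<in> H \<and> d \<in> H \<and> y \<in> X \<and> y + d \<in> X \<and> y + 2 *s d \<in> X})"
    using card_3aps_in_subspace_ge[OF C(2) H dim, of X] a unfolding s_def M_def a_def X_def
    by (intro mult_left_mono) auto
  also have "\<dots> \<le> coset_ap_count F H g"
    by (rule coset_ap_count_ge_level_set_aps[OF F]) (use a in \<open>auto simp: X_def a_def\<close>)
  also have "\<dots> \<le> \<theta> * a^3 * M\<^sup>2" using T unfolding a_def M_def .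
  finally have "(a^3 * M\<^sup>2 / 8) * s powr C \<le> (a^3 * M\<^sup>2 / 8) * (8 * \<theta>)"
    by (simp add: power_divide mult_ac)
  hence "s powr C \<le> 8 * \<theta>" using a M unfolding a_def by (simp add: mult_le_cancel_left_pos)
  hence s2: "s\<^sup>2 \<le> (8 * \<theta>) powr (2 / C)" using \<theta> by (intro sq_le_powr_of_powr_le[OF s C(1)]) auto
  have "(M * a / 2)^3 \<le> (s * M)\<^sup>2 * (\<Sum>y\<in>H. (F (y + g))^3)"
    using level_set_cube_mass[of F H g, OF F] M unfolding s_def M_def a_def X_def by simp
  hence "M\<^sup>2 * (M * (a^3 / 8)) \<le> M\<^sup>2 * (s\<^sup>2 * (\<Sum>y\<in>H. (F (y + g))^3))"
    by (simp add: power_mult_distrib power_divide mult_ac power2_eq_square power3_eq_cube)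
  hence mass: "M * (a^3 / 8) \<le> s\<^sup>2 * (\<Sum>y\<in>H. (F (y + g))^3)" using M by simp
  moreover have "M * (a^3 / 8) > 0" using a M unfolding a_def[symmetric] by (intro mult_pos_pos) auto
  ultimately have "s \<noteq> 0" by (cases "s = 0") auto
  hence "s > 0" using s by simp
  have "(8 * \<theta>) powr (- 2 / C) = inverse ((8 * \<theta>) powr (2 / C))"
    using powr_minus[of "8 * \<theta>" "2 / C"] by simp
  hence "a^3 / 8 * (8 * \<theta>) powr (- 2 / C) = a^3 / 8 / (8 * \<theta>) powr (2 / C)"
    by (simp only: divide_inverse)
  also have "\<dots> \<le> a^3 / 8 / s\<^sup>2"
    using s2 \<open>s > 0\<close> a \<theta> unfolding a_def by (intro divide_left_mono) auto
  also have "\<dots> = M * (a^3 / 8) / (M * s\<^sup>2)" using M by simp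
  also have "\<dots> \<le> s\<^sup>2 * (\<Sum>y\<in>H. (F (y + g))^3) / (M * s\<^sup>2)"
    using mass M by (intro divide_right_mono) auto
  also have "\<dots> = (\<Sum>y\<in>H. (F (y + g))^3) / M" using \<open>s > 0\<close> by simp
  finally show ?thesis unfolding a_def M_def .
qed

lemma sum_translates: "(\<Sum>g\<in>UNIV. \<Sum>y\<in>H. \<phi> (y + g)) = of_nat (card H) * (\<Sum>x\<in>UNIV. \<phi> (x :: ('p::prime_card, 'n::finite) Fpn))"
proof -
  have "(\<Sum>g\<in>UNIV. \<Sum>y\<in>H. \<phi> (y + g)) = (\<Sum>y\<in>H. \<Sum>g\<in>UNIV. \<phi> (y + g))" by (rule sum.swap)
  also have "\<dots> = (\<Sum>y\<in>H. \<Sum>x\<in>UNIV. \<phi> x)" by (rule sum.cong[OF refl sum_UNIV_translate])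
  finally show ?thesis by simp
qed

lemma mean_cube_increment:
  fixes F :: "('p::prime_card, 'n::finite) Fpn \<Rightarrow> real"
  assumes H: "vec.subspace H" and dim: "vec.dim H \<ge> 1"
    and C: "C > 0" "three_AP_const TYPE('p) C" and F: "\<And>x. F x \<ge> 0" and \<theta>: "\<theta> > 0"
    and T: "(\<Sum>g\<in>UNIV. coset_ap_count F H g) \<le> \<theta> / 2 * (real (card H))\<^sup>2 * (\<Sum>g\<in>UNIV. (coset_density F H g)^3)"
  shows "(8 * \<theta>) powr (- 2 / C) / 16 * (\<Sum>g\<in>UNIV. (coset_density F H g)^3) \<le> (\<Sum>x\<in>UNIV. (F x)^3)"
proof -
  define a M B K where "a = coset_density F H" and "M = real (card H)"
    and "B = (\<Sum>g\<in>UNIV. (a g)^3)" and "K = (8 * \<theta>) powr (- 2 / C)"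
  define w where "w g = (\<Sum>y\<in>H. (F (y + g))^3) / M" for g
  \<comment> \<open>Markov: cosets with many 3-APs relative to their density carry at most half of the cube mass\<close>
  define G where "G = {g. coset_ap_count F H g \<le> \<theta> * (a g)^3 * M\<^sup>2}"
  have M: "M > 0" unfolding M_def using subspace_card_pos[OF H] by simp
  have a: "a g \<ge> 0" for g unfolding a_def coset_density_def using F by (simp add: sum_nonneg)
  have T0: "coset_ap_count F H g \<ge> 0" for g unfolding coset_ap_count_def using F by (simp add: sum_nonneg)
  have "(\<Sum>g\<in>UNIV - G. (a g)^3) \<le> (\<Sum>g\<in>UNIV - G. coset_ap_count F H g / (\<theta> * M\<^sup>2))"
    using \<theta> M by (intro sum_mono) (auto simp: G_def field_simps)
  also have "\<dots> \<le> (\<Sum>g\<in>UNIV. coset_ap_count F H g) / (\<theta> * M\<^sup>2)"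
    using T0 \<theta> by (simp add: sum_divide_distrib[symmetric] divide_right_mono sum_mono2)
  also have "\<dots> \<le> B / 2"
  proof -
    have "\<theta> / 2 * M\<^sup>2 * B = B / 2 * (\<theta> * M\<^sup>2)" by simp
    hence "(\<Sum>g\<in>UNIV. coset_ap_count F H g) \<le> B / 2 * (\<theta> * M\<^sup>2)"
      using T unfolding B_def a_def M_def by (simp add: mult_ac)
    thus ?thesis using \<theta> M by (simp add: pos_divide_le_eq)
  qed
  finally have "B / 2 \<le> (\<Sum>g\<in>G. (a g)^3)"
    unfolding B_def using sum.subset_diff[of G UNIV "\<lambda>g. (a g)^3"] by simp
  hence "B / 2 * (K / 8) \<le> (\<Sum>g\<in>G. (a g)^3) * (K / 8)"
    unfolding K_def by (intro mult_right_mono) auto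
  also have "\<dots> = (\<Sum>g\<in>G. (a g)^3 / 8 * K)"
    by (simp add: sum_distrib_right)
  also have "\<dots> \<le> (\<Sum>g\<in>G. w g)"
  proof (rule sum_mono)
    fix g assume "g \<in> G"
    show "(a g)^3 / 8 * K \<le> w g"
    proof (cases "a g = 0")
      case False
      show ?thesis unfolding w_def K_def a_def M_def
        by (rule coset_cube_mass_ge[OF H dim C F _ \<theta>])
           (use False a[of g] \<open>g \<in> G\<close> in \<open>auto simp: G_def a_def M_def\<close>)
    qed (use M F in \<open>simp add: w_def sum_nonneg\<close>)
  qed
  also have "\<dots> \<le> (\<Sum>g\<in>UNIV. w g)" using M F by (intro sum_mono2) (auto simp: w_def sum_nonneg)
  also have "\<dots> = (\<Sum>x\<in>UNIV. (F x)^3)"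
    using sum_translates[of "\<lambda>x. (F x)^3" H] M vec.subspace_0[OF H]
    unfolding w_def sum_divide_distrib[symmetric] by (auto simp: M_def)
  finally show ?thesis unfolding B_def K_def a_def by (simp add: mult.commute)
qed

section \<open>The density increment\<close>

lemma coset_density_bounds:
  fixes f :: "('p::prime_card, 'n::finite) Fpn \<Rightarrow> real"
  assumes f: "\<And>x. 0 \<le> f x \<and> f x \<le> 1" and K: "vec.subspace K"
  shows "0 \<le> coset_density f K g \<and> coset_density f K g \<le> 1"
proof -
  have "(\<Sum>x\<in>K. f (x + g)) \<le> real (card K)"
    using f sum_mono[of K "\<lambda>x. f (x + g)" "\<lambda>_. 1"] by simp
  moreover have "(\<Sum>x\<in>K. f (x + g)) \<ge> 0" using f by (simp add: sum_nonneg)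
  ultimately show ?thesis
    using subspace_card_pos[OF K] unfolding coset_density_def by (simp add: divide_le_eq_1)
qed

lemma coset_density_coset_density:
  fixes f :: "('p::prime_card, 'n::finite) Fpn \<Rightarrow> real"
  assumes K: "vec.subspace K" and K': "vec.subspace K'" and "K' \<subseteq> K"
  shows "coset_density (coset_density f K') K g = coset_density f K g"
proof -
  have "(\<Sum>y\<in>K. \<Sum>z\<in>K'. f (z + (y + g))) = (\<Sum>z\<in>K'. \<Sum>y\<in>K. f (z + y + g))"
    by (subst sum.swap) (simp add: add.assoc)
  also have "\<dots> = (\<Sum>z\<in>K'. \<Sum>y\<in>K. f (y + g))"
  proof (rule sum.cong[OF refl])
    fix z assume "z \<in> K'"
    hence "z \<in> K" using \<open>K' \<subseteq> K\<close> by blast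
    show "(\<Sum>y\<in>K. f (z + y + g)) = (\<Sum>y\<in>K. f (y + g))"
      by (rule sum.reindex_bij_witness[of _ "\<lambda>y. y - z" "\<lambda>y. z + y"])
         (use \<open>z \<in> K\<close> vec.subspace_add[OF K] vec.subspace_diff[OF K] in \<open>auto simp: algebra_simps\<close>)
  qed
  finally have "(\<Sum>y\<in>K. \<Sum>z\<in>K'. f (z + (y + g))) = real (card K') * (\<Sum>y\<in>K. f (y + g))" by simp
  thus ?thesis using subspace_card_pos[OF K'] subspace_nonempty[OF K']
    unfolding coset_density_def by (simp add: sum_divide_distrib[symmetric])
qed

lemma sum_coset_density:
  fixes f :: "('p::prime_card, 'n::finite) Fpn \<Rightarrow> real"
  assumes "vec.subspace K"
  shows "(\<Sum>g\<in>UNIV. coset_density f K g) = (\<Sum>x\<in>UNIV. f x)"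
  using sum_translates[of f K] subspace_nonempty[OF assms]
  unfolding coset_density_def sum_divide_distrib[symmetric] by simp

lemma mean_cube_density_le_density:
  fixes f :: "('p::prime_card, 'n::finite) Fpn \<Rightarrow> real"
  assumes f: "\<And>x. 0 \<le> f x \<and> f x \<le> 1" and K: "vec.subspace K"
  shows "mean_cube_density f K \<le> (\<Sum>x\<in>UNIV. f x) / real CARD(('p, 'n) Fpn)"
proof -
  have "(coset_density f K g)^3 \<le> coset_density f K g" for g
  proof -
    have c: "0 \<le> coset_density f K g" "coset_density f K g \<le> 1"
      using coset_density_bounds[of f K g, OF f K] by simp_all
    hence "coset_density f K g * (coset_density f K g)\<^sup>2 \<le> coset_density f K g * 1"
      by (intro mult_left_mono) (simp_all add: power_le_one)
    thus ?thesis by (simp add: power2_eq_square power3_eq_cube)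
  qed
  hence "(\<Sum>g\<in>UNIV. (coset_density f K g)^3) \<le> (\<Sum>x\<in>UNIV. f x)"
    using sum_mono sum_coset_density[OF K, of f] by metis
  thus ?thesis unfolding mean_cube_density_def by (simp add: divide_right_mono)
qed

lemma sum_coset_ap_count:
  fixes u :: "('p::prime_card, 'n::finite) Fpn \<Rightarrow> real"
  shows "(\<Sum>g\<in>UNIV. coset_ap_count u K g) =
    real (card K) * (\<Sum>x\<in>UNIV. \<Sum>d\<in>K. u x * u (x + d) * u (x + 2 *s d))"
  unfolding coset_ap_count_def
  using sum_translates[of "\<lambda>x. \<Sum>d\<in>K. u x * u (x + d) * u (x + 2 *s d)" K] by (simp add: add.assoc)

lemma sum_3aps_subspace_eq:
  fixes f :: "('p::prime_card, 'n::finite) Fpn \<Rightarrow> real"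
  assumes K: "vec.subspace K" and "card K \<ge> 2"
  shows "(\<Sum>x\<in>UNIV. \<Sum>d\<in>K. f x * f (x + d) * f (x + 2 *s d)) =
    (real (card K) - 1) * real CARD(('p, 'n) Fpn) * ap_density f K + (\<Sum>x\<in>UNIV. (f x)^3)"
proof -
  have "0 \<in> K" by (rule vec.subspace_0[OF K])
  hence c: "real (card (K - {0})) = real (card K) - 1" using \<open>card K \<ge> 2\<close> by (simp add: of_nat_diff)
  have "(\<Sum>d\<in>K. f x * f (x + d) * f (x + 2 *s d)) = (\<Sum>d\<in>K - {0}. f x * f (x + d) * f (x + 2 *s d)) + (f x)^3" for x
    using \<open>0 \<in> K\<close> by (simp add: sum.remove power3_eq_cube)
  moreover have "(\<Sum>x\<in>UNIV. \<Sum>d\<in>K - {0}. f x * f (x + d) * f (x + 2 *s d)) =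
      real (card (K - {0})) * real CARD(('p, 'n) Fpn) * ap_density f K"
    using c \<open>card K \<ge> 2\<close> unfolding ap_density_def by (simp add: sum_divide_distrib[symmetric])
  ultimately show ?thesis unfolding c by (simp add: sum.distrib)
qed

lemma mean_cube_density_increment:
  fixes f :: "('p::prime_card, 'n::finite) Fpn \<Rightarrow> real"
  assumes H: "vec.subspace H" and dim: "vec.dim H \<ge> 1"
    and C: "C > 0" "three_AP_const TYPE('p) C" and f: "\<And>x. 0 \<le> f x \<and> f x \<le> 1"
    and H': "vec.subspace H'" "H' \<subseteq> H" and \<theta>: "\<theta> > 0"
    and T: "(\<Sum>g\<in>UNIV. coset_ap_count (coset_density f H') H g)
      \<le> \<theta> / 2 * (real (card H))\<^sup>2 * real CARD(('p, 'n) Fpn) * mean_cube_density f H"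
  shows "(8 * \<theta>) powr (- 2 / C) / 16 * mean_cube_density f H \<le> mean_cube_density f H'"
proof -
  define N where "N = real CARD(('p, 'n) Fpn)"
  have N: "N > 0" unfolding N_def by simp
  have cube_sum: "(\<Sum>g\<in>UNIV. (coset_density (coset_density f H') H g)^3) = N * mean_cube_density f H"
    unfolding coset_density_coset_density[OF H H'] mean_cube_density_def N_def by simp
  have "(8 * \<theta>) powr (- 2 / C) / 16 * (N * mean_cube_density f H) \<le> N * mean_cube_density f H'"
    using mean_cube_increment[OF H dim C _ \<theta>, of "coset_density f H'"] T coset_density_bounds[OF f H'(1)]
    unfolding cube_sum by (simp add: mean_cube_density_def N_def mult_ac)
  thus ?thesis using N by (simp add: mult.left_commute[of N])
qed

lemma sum_coset_ap_count_smoothed_le: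
  fixes f :: "('p::prime_card, 'n::finite) Fpn \<Rightarrow> real"
  assumes p: "CARD('p) \<noteq> 2" and f: "\<And>x. 0 \<le> f x \<and> f x \<le> 1"
    and H: "vec.subspace H" "card H \<ge> 2" and H': "vec.subspace H'" "H' \<subseteq> H" and \<beta>: "\<beta> > 0"
    and \<alpha>: "(\<Sum>x\<in>UNIV. f x) / real CARD(('p, 'n) Fpn) \<le> real (card H) * \<beta> / 2"
    and \<lambda>: "ap_density f H < \<beta>"
    and small: "\<And>g r. r \<notin> annihilator H' \<Longrightarrow>
      cmod (fourier (coset_restrict f H g) r) \<le> \<beta> * real (card H) / (6 * real CARD(('p, 'n) Fpn))"
  shows "(\<Sum>g\<in>UNIV. coset_ap_count (coset_density f H') H g) \<le> 2 * (real (card H))\<^sup>2 * real CARD(('p, 'n) Fpn) * \<beta>"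
proof -
  define N M where "N = real CARD(('p, 'n) Fpn)" and "M = real (card H)"
  have N: "N > 0" unfolding N_def by simp
  have M: "M \<ge> 2" unfolding M_def using H(2) by simp
  have err: "coset_ap_count (coset_density f H') H g \<le> coset_ap_count f H g + \<beta> * M\<^sup>2 / 2" for g
  proof -
    have "\<bar>coset_ap_count f H g - coset_ap_count (coset_density f H') H g\<bar> \<le> 3 * (\<beta> * M / (6 * N)) * N * M"
      unfolding N_def M_def
      by (rule coset_ap_count_smoothing_error[OF p f H(1) H']) (use \<beta> small in \<open>simp_all add: M_def N_def\<close>)
    also have "\<dots> = \<beta> * M\<^sup>2 / 2" using N by (simp add: power2_eq_square)
    finally show ?thesis by linarith
  qed
  have cubes: "(\<Sum>x\<in>UNIV. (f x)^3) \<le> (\<Sum>x\<in>UNIV. f x)"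
  proof (rule sum_mono)
    fix x
    have "f x * (f x)\<^sup>2 \<le> f x * 1" using f[of x] by (intro mult_left_mono) (simp_all add: power_le_one)
    thus "(f x)^3 \<le> f x" by (simp add: power2_eq_square power3_eq_cube)
  qed
  have "(\<Sum>x\<in>UNIV. \<Sum>d\<in>H. f x * f (x + d) * f (x + 2 *s d)) \<le> (M - 1) * N * \<beta> + N * (M * \<beta> / 2)"
    unfolding sum_3aps_subspace_eq[OF H] M_def[symmetric] N_def[symmetric]
    using \<lambda> \<alpha> cubes M N by (intro add_mono mult_left_mono) (auto simp: N_def M_def pos_divide_le_eq mult.commute)
  hence "(\<Sum>g\<in>UNIV. coset_ap_count f H g) \<le> M * ((M - 1) * N * \<beta> + N * (M * \<beta> / 2))"
    unfolding sum_coset_ap_count M_def[symmetric] using M by (intro mult_left_mono) auto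
  moreover have "(\<Sum>g\<in>UNIV. coset_ap_count (coset_density f H') H g)
      \<le> (\<Sum>g\<in>UNIV. coset_ap_count f H g + \<beta> * M\<^sup>2 / 2)"
    by (rule sum_mono) (rule err)
  moreover have "(\<Sum>g\<in>(UNIV :: ('p, 'n) Fpn set). coset_ap_count f H g + \<beta> * M\<^sup>2 / 2)
      = (\<Sum>g\<in>UNIV. coset_ap_count f H g) + N * (\<beta> * M\<^sup>2 / 2)"
    by (simp add: sum.distrib N_def)
  ultimately have "(\<Sum>g\<in>UNIV. coset_ap_count (coset_density f H') H g)
      \<le> M * ((M - 1) * N * \<beta> + N * (M * \<beta> / 2)) + N * (\<beta> * M\<^sup>2 / 2)" by linarith
  also have "\<dots> \<le> 2 * M\<^sup>2 * N * \<beta>"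
    using M N \<beta> by (simp add: power2_eq_square algebra_simps)
  finally show ?thesis unfolding M_def N_def .
qed

lemma density_increment_exponent:
  fixes X C :: real
  assumes C: "C \<ge> 1" and X: "X \<ge> 2 powr (8 + 8 * C)"
  shows "X powr (1 + 1 / (2 * C)) < X * (32 / X) powr (- 2 / C) / 16"
proof -
  have X0: "X > 0" using X by (smt (verit) powr_gt_zero)
  define l L where "l = ln (2::real)" and "L = ln X"
  have l: "l > 0" unfolding l_def by simp
  have LX: "(8 + 8 * C) * l \<le> L"
    using ln_le_cancel_iff[of "2 powr (8 + 8 * C)" X] X X0 unfolding l_def L_def by (simp add: ln_powr)
  have ln32: "ln (32::real) = 5 * l" and ln16: "ln (16::real) = 4 * l"
    unfolding l_def using ln_realpow[of "2::real" 5] ln_realpow[of "2::real" 4] by simp_all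
  have lhs: "ln (X * (32 / X) powr (- 2 / C) / 16) = L + (- 2 / C) * (5 * l - L) - 4 * l"
    using X0 by (simp add: ln_div ln_mult ln_powr ln32 ln16 L_def)
  have rhs: "ln (X powr (1 + 1 / (2 * C))) = (1 + 1 / (2 * C)) * L"
    using X0 unfolding L_def by (simp add: ln_powr)
  have "(L + (- 2 / C) * (5 * l - L) - 4 * l) - (1 + 1 / (2 * C)) * L = (3 * L - 20 * l - 8 * (C * l)) / (2 * C)"
    using C by (simp add: field_simps)
  moreover have "(3 * L - 20 * l - 8 * (C * l)) / (2 * C) > 0"
  proof (rule divide_pos_pos)
    have "l \<le> C * l" using C l by simp
    moreover have "8 * l + 8 * (C * l) \<le> L" using LX by (simp add: algebra_simps)
    ultimately show "3 * L - 20 * l - 8 * (C * l) > 0" using l by linarith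
  qed (use C in simp)
  ultimately have "ln (X powr (1 + 1 / (2 * C))) < ln (X * (32 / X) powr (- 2 / C) / 16)"
    unfolding lhs rhs by linarith
  thus ?thesis using X0 by (subst (asm) ln_less_cancel_iff) auto
qed

lemma Codim_le_of_dim_le:
  fixes H H' :: "('p::prime_card, 'n::finite) Fpn set"
  assumes "real (vec.dim H) \<le> real (vec.dim H') + x"
  shows "real (Codim H') \<le> real (Codim H) + x"
  using assms dim_le_CARD[of H] dim_le_CARD[of H'] unfolding Codim_def by (simp add: of_nat_diff)

lemma CARD_div_card_subspace:
  fixes H :: "('p::prime_card, 'n::finite) Fpn set"
  assumes "vec.subspace H"
  shows "real CARD(('p, 'n) Fpn) / real (card H) = real CARD('p) ^ Codim H"
  using dim_le_CARD[of H] unfolding card_subspace[OF assms] Codim_def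
  by (simp add: power_diff)

lemma exists_low_Codim_subspace_annihilating_large_spectrum:
  fixes f :: "('p::prime_card, 'n::finite) Fpn \<Rightarrow> real"
  assumes f: "\<And>x. 0 \<le> f x \<and> f x \<le> 1" and \<beta>: "\<beta> > 0" and H: "vec.subspace H"
  obtains H' where "vec.subspace H'" "H' \<subseteq> H"
    "real (Codim H') \<le> real (Codim H) + real CARD('p) ^ Codim H * 36 / \<beta>\<^sup>2"
    "\<And>g r. r \<notin> annihilator H' \<Longrightarrow>
      cmod (fourier (coset_restrict f H g) r) \<le> \<beta> * real (card H) / (6 * real CARD(('p, 'n) Fpn))"
proof -
  define N M where "N = real CARD(('p, 'n) Fpn)" and "M = real (card H)"
  have M: "M > 0" unfolding M_def using subspace_card_pos[OF H] by simp
  have N: "N > 0" unfolding N_def by simp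
  define \<epsilon> where "\<epsilon> = \<beta> * M / (6 * N)"
  have \<epsilon>: "\<epsilon> > 0" unfolding \<epsilon>_def using \<beta> M N by simp
  obtain H' where H': "vec.subspace H'" "H' \<subseteq> H"
    and dim: "real (vec.dim H) \<le> real (vec.dim H') + M / (N * \<epsilon>\<^sup>2)"
    and small: "\<And>g r. r \<notin> annihilator H' \<Longrightarrow> cmod (fourier (coset_restrict f H g) r) \<le> \<epsilon>"
    using exists_subspace_annihilating_large_spectrum[of f, OF f \<epsilon> H] unfolding M_def N_def by metis
  have "M / (N * \<epsilon>\<^sup>2) = N / M * 36 / \<beta>\<^sup>2"
    unfolding \<epsilon>_def using \<beta> M N by (simp add: field_simps power2_eq_square)
  also have "N / M = real CARD('p) ^ Codim H"
    unfolding N_def M_def by (rule CARD_div_card_subspace[OF H])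
  finally have "real (Codim H') \<le> real (Codim H) + real CARD('p) ^ Codim H * 36 / \<beta>\<^sup>2"
    using Codim_le_of_dim_le[OF dim] by simp
  from that[OF H' this small[unfolded \<epsilon>_def M_def N_def]] show thesis .
qed

theorem mainTheorem6:
  fixes f :: "('p::prime_card, 'n::finite) Fpn \<Rightarrow> real"
    and H :: "('p, 'n) Fpn set"
    and C \<alpha> \<beta> :: real
  assumes p_odd: "CARD('p) \<noteq> 2"
    and C_ge: "C \<ge> 1"
    and C_prop: "three_AP_const TYPE('p) C"
    and f_range: "\<And>x. 0 \<le> f x \<and> f x \<le> 1"
    and alpha_def: "\<alpha> = (\<Sum>x\<in>UNIV. f x) / real CARD(('p, 'n) Fpn)"
    and beta_pos: "\<beta> > 0"
    and H_sub: "vec.subspace H"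
    and H_card: "real (card H) \<ge> 2 * \<alpha> / \<beta>"
    and H_b: "mean_cube_density f H \<ge> 2 powr (8 + 8 * C) * \<beta>"
    and H_lambda: "ap_density f H < \<beta>"
  shows "\<exists>H'. vec.subspace H' \<and> H' \<subseteq> H \<and>
           real (Codim H') \<le> real (Codim H) + real CARD('p) ^ (Codim H) * 36 / \<beta>^2 \<and>
           mean_cube_density f H' / \<beta> > (mean_cube_density f H / \<beta>) powr (1 + 1 / (2 * C))"
proof -
  define b where "b = mean_cube_density f H"
  have "\<beta> \<le> 2 powr (8 + 8 * C) * \<beta>" using beta_pos C_ge by (simp add: ge_one_powr_ge_zero)
  hence b: "\<beta> \<le> b" using H_b unfolding b_def by linarith
  have \<alpha>: "\<alpha> \<le> \<beta> * real (card H) / 2" using H_card beta_pos by (simp add: field_simps)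
  moreover have "b \<le> \<alpha>" unfolding b_def alpha_def by (rule mean_cube_density_le_density[OF f_range H_sub])
  ultimately have "\<beta> * 2 \<le> \<beta> * real (card H)" using b by linarith
  hence "card H \<ge> 2" using beta_pos by (simp add: mult_le_cancel_left_pos)
  hence dim: "vec.dim H \<ge> 1" using card_subspace[OF H_sub] by (cases "vec.dim H") auto
  obtain H' where H': "vec.subspace H'" "H' \<subseteq> H"
    and codim: "real (Codim H') \<le> real (Codim H) + real CARD('p) ^ Codim H * 36 / \<beta>\<^sup>2"
    and small: "\<And>g r. r \<notin> annihilator H' \<Longrightarrow>
      cmod (fourier (coset_restrict f H g) r) \<le> \<beta> * real (card H) / (6 * real CARD(('p, 'n) Fpn))"
    using exists_low_Codim_subspace_annihilating_large_spectrum[of f, OF f_range beta_pos H_sub] by metis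
  have "(\<Sum>g\<in>UNIV. coset_ap_count (coset_density f H') H g)
      \<le> (4 * \<beta> / b) / 2 * (real (card H))\<^sup>2 * real CARD(('p, 'n) Fpn) * b"
    using sum_coset_ap_count_smoothed_le[OF p_odd f_range H_sub \<open>card H \<ge> 2\<close> H' beta_pos _ H_lambda small]
      \<alpha> b beta_pos unfolding alpha_def by (simp add: mult_ac)
  hence "(8 * (4 * \<beta> / b)) powr (- 2 / C) / 16 * b \<le> mean_cube_density f H'"
    using mean_cube_density_increment[where f = f and \<theta> = "4 * \<beta> / b", OF H_sub dim _ C_prop f_range H'] C_ge b beta_pos
    unfolding b_def by simp
  moreover have "(b / \<beta>) powr (1 + 1 / (2 * C)) < b / \<beta> * (32 / (b / \<beta>)) powr (- 2 / C) / 16"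
    using H_b beta_pos unfolding b_def by (intro density_increment_exponent[OF C_ge]) (simp add: field_simps)
  ultimately have "(b / \<beta>) powr (1 + 1 / (2 * C)) < mean_cube_density f H' / \<beta>"
    using b beta_pos by (simp add: field_simps)
  thus ?thesis using H' codim unfolding b_def by blast
qed

end
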